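(* Let $m,n,p\ge1$, $B\in\mathbb{R}^{m\times n}$, let $J:\mathbb{R}^p\to\mathbb{R}^{m\times n}$ be linear with adjoint $J^*$ and $J^*J$ invertible, and let $\lambda>0$. Consider the problem $$\min_{X,E,\Delta\tau}\big\{\|X\|_*+\lambda\|E\|_1:\ B+J\Delta\tau=X+E\big\}\qquad (P)$$ over $X,E\in\mathbb{R}^{m\times n}$, $\Delta\tau\in\mathbb{R}^p$. Fix $\sigma>0$, $\rho\in(0,2)$ and a starting point $\tilde\Omega^0=(\tilde X^0,\Delta\tilde\tau^0,\tilde E^0,\tilde Y^0)$, and generate for $k=0,1,\dots$ (sGS-ADMM\_G): 1. $\Delta\tau^{k+1/2}=-(J^*J)^{-1}[J^*(B-\tilde X^k-\tilde E^k)+J^*\tilde Y^k/\sigma]$; 2. $E^{k+1}=\mathcal{S}_{\lambda/\sigma}(B+J\Delta\tau^{k+1/2}-\tilde X^k+\tilde Y^k/\sigma)$; 3. $\Delta\tau^{k+1}=-(J^*J)^{-1}[J^*(B-\tilde X^k-E^{k+1})+J^*\tilde Y^k/\sigma]$; 4. $Y^{k+1}=\tilde Y^k+\sigma(B+J\Delta\tau^{k+1}-\tilde X^k-E^{k+1})$; 5. $X^{k+1}=\mathcal{D}_{1/\sigma}(B+J\Delta\tau^{k+1}-E^{k+1}+Y^{k+1}/\sigma)$; 6. with $\Omega^{k+1}=(X^{k+1},\Delta\tau^{k+1},E^{k+1},Y^{k+1})$, set $\tilde\Omega^{k+1}=\tilde\Omega^k+\rho(\Omega^{k+1}-\tilde\Omega^k)$.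 Then the sequence $\{(X^k,\Delta\tau^k,E^k,Y^k)\}$ is well defined and converges to a limit $(\bar X,\Delta\bar\tau,\bar E,\bar Y)$ such that $(\bar X,\Delta\bar\tau,\bar E)$ is an optimal solution of $(P)$.
   Context: $\|X\|_*$ is the nuclear norm, $\|E\|_1$ the entrywise $\ell_1$ norm, $\|\cdot\|_F$ the Frobenius norm. For $\mu>0$, $\mathcal{D}_\mu(X)=\operatorname{argmin}_Y\{\|Y\|_*+\frac1{2\mu}\|Y-X\|_F^2\}=U\,\mathrm{diag}(\max\{\sigma_i-\mu,0\})V^\top$ where $X=U\,\mathrm{diag}(\sigma_i)V^\top$ is an SVD, and $\mathcal{S}_\mu(X)$ is entrywise soft-thresholding $[\mathcal{S}_\mu(X)]_{ij}=\mathrm{sgn}(X_{ij})\max\{|X_{ij}|-\mu,0\}$. In the application $B=D\circ\tau$ is the current transformed image and $J$ its Jacobian with respect to the transform parameters. *)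

theory Defs
  imports "HOL-Analysis.Analysis"
begin

text \<open>Matrices in R^{m x n} are rendered as real^'n^'m; the Euclidean norm on this
type is the Frobenius norm and the inner product is the trace inner product.\<close>

definition outer :: "real^'m \<Rightarrow> real^'n \<Rightarrow> real^'n^'m" where
  "outer u v = (\<chi> i j. u$i * v$j)"

text \<open>Nuclear norm = sum of singular values, read off from a (compact) SVD
  X = sum_k s_k u_k v_k^T with orthonormal u_k, orthonormal v_k and s_k > 0.\<close>
definition is_svd :: "real^'n^'m \<Rightarrow> nat set \<Rightarrow> (nat \<Rightarrow> real) \<Rightarrow> (nat \<Rightarrow> real^'m)
    \<Rightarrow> (nat \<Rightarrow> real^'n) \<Rightarrow> bool" where
  "is_svd X K s u v \<longleftrightarrow> finite K \<and> (\<forall>k\<in>K. s k > 0)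
     \<and> (\<forall>k\<in>K. \<forall>l\<in>K. u k \<bullet> u l = (if k = l then 1 else 0))
     \<and> (\<forall>k\<in>K. \<forall>l\<in>K. v k \<bullet> v l = (if k = l then 1 else 0))
     \<and> X = (\<Sum>k\<in>K. s k *\<^sub>R outer (u k) (v k))"

definition nuclear_norm :: "real^'n^'m \<Rightarrow> real" where
  "nuclear_norm X = (THE r. \<exists>K s u v. is_svd X K s u v \<and> r = (\<Sum>k\<in>K. s k))"

definition l1_norm :: "real^'n^'m \<Rightarrow> real" where
  "l1_norm X = (\<Sum>i\<in>UNIV. \<Sum>j\<in>UNIV. \<bar>X$i$j\<bar>)"

text \<open>Singular value thresholding as the proximal map of the nuclear norm.\<close>
definition svt :: "real \<Rightarrow> real^'n^'m \<Rightarrow> real^'n^'m" where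
  "svt \<mu> X = (THE Y. \<forall>Z. nuclear_norm Y + 1 / (2*\<mu>) * (norm (Y - X))^2
                        \<le> nuclear_norm Z + 1 / (2*\<mu>) * (norm (Z - X))^2)"

definition soft :: "real \<Rightarrow> real^'n^'m \<Rightarrow> real^'n^'m" where
  "soft \<mu> X = (\<chi> i j. sgn (X$i$j) * max (\<bar>X$i$j\<bar> - \<mu>) 0)"

definition optimal_P :: "real \<Rightarrow> real^'n^'m \<Rightarrow> (real^'p \<Rightarrow> real^'n^'m)
   \<Rightarrow> real^'n^'m \<Rightarrow> real^'p \<Rightarrow> real^'n^'m \<Rightarrow> bool" where
  "optimal_P lam B J X t E \<longleftrightarrow> B + J t = X + E \<and>
     (\<forall>X' t' E'. B + J t' = X' + E' \<longrightarrow>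
        nuclear_norm X + lam * l1_norm E \<le> nuclear_norm X' + lam * l1_norm E')"

end

(* After eliminating the Delta-tau steps, one sweep of sGS-ADMM depends on the current point only
   through the state s = (Xt - Yt/sigma, P Et), where P = J (J^* J)^-1 J^* is the orthogonal
   projection onto the range of J, and the relaxation reads s |-> s + rho (F s - s) for a continuous
   map F built from soft thresholding and singular value thresholding. Adding the variational
   inequalities of these two proximal maps to the KKT conditions of (P) shows that F is firmly
   quasi-nonexpansive towards the state q of any KKT point: <F s - q, s - F s> >= 0. KKT points
   exist (as limits of minimisers of quadratic penalty problems) and fixed points of F yield KKT
   points, so the Krasnoselskii-Mann argument (Fejer monotonicity, square-summable residuals, a
   convergent subsequence) makes the states converge to a fixed point; continuity of the substeps
   carries this over to the iterates. The nuclear norm is handled through its dual representation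
   ||X||_* = sup {<X, W> : ||W||_op <= 1}, which follows from the existence of an SVD. *)

theory Submission
  imports Defs
begin

section \<open>The nuclear norm as the dual of the operator norm\<close>

definition op_norm_le_1 :: "real^'n^'m \<Rightarrow> bool" where
  "op_norm_le_1 W \<longleftrightarrow> (\<forall>a b. norm a = 1 \<longrightarrow> norm b = 1 \<longrightarrow> a \<bullet> (W *v b) \<le> 1)"

definition nuclear_sup :: "real^'n^'m \<Rightarrow> real" where
  "nuclear_sup X = Sup {X \<bullet> W | W. op_norm_le_1 W}"

lemma inner_matrix: "(A::real^'n^'m) \<bullet> B = (\<Sum>i\<in>UNIV. \<Sum>j\<in>UNIV. A$i$j * B$i$j)"
  by (simp add: inner_vec_def)

lemma inner_matrix_vector_mult: "a \<bullet> ((M::real^'n^'m) *v b) = M \<bullet> outer a b"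
  by (simp add: inner_matrix inner_vec_def matrix_vector_mult_def outer_def sum_distrib_left
      algebra_simps)

lemma inner_outer: "outer a b \<bullet> outer c d = (a \<bullet> c) * ((b::real^'n) \<bullet> d)"
  by (simp add: inner_matrix inner_vec_def outer_def sum_product algebra_simps)

lemma norm_outer: "norm (outer a b) = norm a * norm (b::real^'n)"
  by (simp add: norm_eq_sqrt_inner inner_outer real_sqrt_mult)

lemma inner_axis_matrix_vector_mult: "axis i 1 \<bullet> ((W::real^'n^'m) *v axis j 1) = W$i$j"
proof -
  have "W *v axis j 1 = (\<chi> i. W$i$j)"
    by (simp add: matrix_vector_mult_def axis_def vec_eq_iff if_distrib cong: if_cong)
  then show ?thesis by (simp add: inner_axis')
qed

lemma op_norm_le_1_0: "op_norm_le_1 0"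
  by (simp add: op_norm_le_1_def)

lemma op_norm_le_1_entry:
  assumes "op_norm_le_1 W" shows "\<bar>W$i$j\<bar> \<le> 1"
proof -
  have "W$i$j \<le> 1"
    using assms inner_axis_matrix_vector_mult[of i W j] unfolding op_norm_le_1_def
    by (metis norm_axis_1)
  moreover have "- W$i$j \<le> 1"
    using assms inner_axis_matrix_vector_mult[of i W j] unfolding op_norm_le_1_def
    by (metis inner_minus_left norm_axis_1 norm_minus_cancel)
  ultimately show ?thesis by linarith
qed

lemma l1_norm_nonneg: "0 \<le> l1_norm X"
  unfolding l1_norm_def by (intro sum_nonneg) auto

lemma l1_norm_triangle: "l1_norm (X + Y) \<le> l1_norm X + l1_norm Y"
  unfolding l1_norm_def by (simp add: sum.distrib[symmetric] sum_mono abs_triangle_ineq)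

lemma l1_norm_scaleR: "l1_norm (c *\<^sub>R X) = \<bar>c\<bar> * l1_norm X"
  unfolding l1_norm_def by (simp add: sum_distrib_left abs_mult)

lemma norm_le_l1_norm: "norm (X::real^'n^'m) \<le> l1_norm X"
proof -
  have "norm X \<le> (\<Sum>i\<in>UNIV. norm (X$i))" unfolding norm_vec_def by (rule L2_set_le_sum) simp
  also have "\<dots> \<le> l1_norm X" unfolding l1_norm_def by (intro sum_mono norm_le_l1_cart)
  finally show ?thesis .
qed

lemma l1_norm_le_norm: "l1_norm (X::real^'n^'m) \<le> real CARD('m) * real CARD('n) * norm X"
proof -
  have "l1_norm X \<le> (\<Sum>i\<in>(UNIV::'m set). \<Sum>j\<in>(UNIV::'n set). norm X)"
    unfolding l1_norm_def
    by (intro sum_mono) (rule order_trans[OF component_le_norm_cart Finite_Cartesian_Product.norm_nth_le])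
  then show ?thesis by simp
qed

lemma convex_on_l1_norm: "convex_on UNIV l1_norm"
proof (rule convex_onI)
  fix t :: real and x y :: "real^'n^'m" assume "0 < t" "t < 1"
  then show "l1_norm ((1 - t) *\<^sub>R x + t *\<^sub>R y) \<le> (1 - t) * l1_norm x + t * l1_norm y"
    using l1_norm_triangle[of "(1 - t) *\<^sub>R x" "t *\<^sub>R y"] by (simp add: l1_norm_scaleR)
qed simp

lemma inner_le_l1_norm_if_op_norm_le_1:
  assumes "op_norm_le_1 W" shows "X \<bullet> W \<le> l1_norm X"
  unfolding inner_matrix l1_norm_def
proof (intro sum_mono)
  fix i j
  have "X$i$j * W$i$j \<le> \<bar>X$i$j\<bar> * \<bar>W$i$j\<bar>" by (simp add: abs_mult[symmetric])
  also have "\<dots> \<le> \<bar>X$i$j\<bar>" using op_norm_le_1_entry[OF assms, of i j] by (simp add: mult_left_le)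
  finally show "X$i$j * W$i$j \<le> \<bar>X$i$j\<bar>" .
qed

lemma nuclear_sup_upper: "op_norm_le_1 W \<Longrightarrow> X \<bullet> W \<le> nuclear_sup X"
  unfolding nuclear_sup_def
  by (rule cSup_upper) (auto intro!: bdd_aboveI[of _ "l1_norm X"] inner_le_l1_norm_if_op_norm_le_1)

lemma nuclear_sup_least: "(\<And>W. op_norm_le_1 W \<Longrightarrow> X \<bullet> W \<le> c) \<Longrightarrow> nuclear_sup X \<le> c"
  unfolding nuclear_sup_def by (rule cSup_least) (use op_norm_le_1_0 in auto)

lemma nuclear_sup_nonneg: "0 \<le> nuclear_sup X"
  using nuclear_sup_upper[OF op_norm_le_1_0, of X] by simp

lemma nuclear_sup_le_l1_norm: "nuclear_sup X \<le> l1_norm X"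
  by (rule nuclear_sup_least) (rule inner_le_l1_norm_if_op_norm_le_1)

lemma nuclear_sup_triangle: "nuclear_sup (X + Y) \<le> nuclear_sup X + nuclear_sup Y"
  by (rule nuclear_sup_least) (simp add: inner_add_left add_mono nuclear_sup_upper)

lemma norm_le_nuclear_sup: "norm (X::real^'n^'m) \<le> nuclear_sup X"
proof (cases "X = 0")
  case True then show ?thesis by (simp add: nuclear_sup_nonneg)
next
  case False
  define W where "W = (1 / norm X) *\<^sub>R X"
  have "op_norm_le_1 W" unfolding op_norm_le_1_def
  proof (intro allI impI)
    fix a :: "real^'m" and b :: "real^'n" assume "norm a = 1" "norm b = 1"
    moreover have "a \<bullet> (W *v b) \<le> norm W * norm (outer a b)"
      unfolding inner_matrix_vector_mult by (rule norm_cauchy_schwarz)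
    ultimately show "a \<bullet> (W *v b) \<le> 1" using False by (simp add: W_def norm_outer)
  qed
  moreover have "X \<bullet> W = norm X" using False
    by (simp add: W_def power2_norm_eq_inner[symmetric] power2_eq_square)
  ultimately show ?thesis using nuclear_sup_upper by metis
qed

lemma convex_on_nuclear_sup: "convex_on UNIV nuclear_sup"
proof (rule convex_onI)
  fix t :: real and x y :: "real^'n^'m" assume t: "0 < t" "t < 1"
  show "nuclear_sup ((1 - t) *\<^sub>R x + t *\<^sub>R y) \<le> (1 - t) * nuclear_sup x + t * nuclear_sup y"
  proof (rule nuclear_sup_least)
    fix W :: "real^'n^'m" assume "op_norm_le_1 W"
    then have "x \<bullet> W \<le> nuclear_sup x" "y \<bullet> W \<le> nuclear_sup y" by (auto intro: nuclear_sup_upper)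
    then show "((1 - t) *\<^sub>R x + t *\<^sub>R y) \<bullet> W \<le> (1 - t) * nuclear_sup x + t * nuclear_sup y"
      using t by (simp add: inner_add_left add_mono mult_left_mono)
  qed
qed simp

lemma subadditive_norm_bounded_continuous_on:
  fixes f :: "'a::real_normed_vector \<Rightarrow> real"
  assumes "\<And>x y. f (x + y) \<le> f x + f y" and "\<And>x. f x \<le> C * norm x" and "0 \<le> C"
  shows "continuous_on S f"
proof (rule lipschitz_on_continuous_on[of C], rule lipschitz_onI)
  fix x y
  have "f x \<le> f y + C * norm (x - y)" "f y \<le> f x + C * norm (y - x)"
    using assms(1)[of y "x - y"] assms(1)[of x "y - x"] assms(2)[of "x - y"] assms(2)[of "y - x"]
    by auto
  then show "dist (f x) (f y) \<le> C * dist x y"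
    by (simp add: dist_real_def dist_norm norm_minus_commute)
qed (fact assms(3))

lemma continuous_on_nuclear_sup: "continuous_on S (nuclear_sup :: real^'n^'m \<Rightarrow> real)"
  using nuclear_sup_triangle order_trans[OF nuclear_sup_le_l1_norm l1_norm_le_norm]
  by (rule subadditive_norm_bounded_continuous_on) simp

lemma continuous_on_l1_norm: "continuous_on S (l1_norm :: real^'n^'m \<Rightarrow> real)"
  using l1_norm_triangle l1_norm_le_norm by (rule subadditive_norm_bounded_continuous_on) simp

section \<open>Singular value decomposition\<close>

lemma bessel_inequality:
  fixes u :: "nat \<Rightarrow> 'a::real_inner"
  assumes fin: "finite K" and on: "\<forall>k\<in>K. \<forall>l\<in>K. u k \<bullet> u l = (if k = l then 1 else 0)"
  shows "(\<Sum>k\<in>K. (u k \<bullet> a)^2) \<le> a \<bullet> a"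
proof -
  define c where "c k = u k \<bullet> a" for k
  define P where "P = (\<Sum>k\<in>K. c k *\<^sub>R u k)"
  have "P \<bullet> P = (\<Sum>k\<in>K. \<Sum>l\<in>K. c k * (c l * (u l \<bullet> u k)))"
    by (simp add: P_def inner_sum_left inner_sum_right sum_distrib_left mult.assoc)
  also have "\<dots> = (\<Sum>k\<in>K. \<Sum>l\<in>K. if k = l then c k * c l else 0)"
    using on by (intro sum.cong refl) auto
  finally have PP: "P \<bullet> P = (\<Sum>k\<in>K. (c k)^2)"
    using fin by (simp add: power2_eq_square)
  have aP: "a \<bullet> P = (\<Sum>k\<in>K. (c k)^2)"
    by (simp add: P_def inner_sum_right c_def power2_eq_square inner_commute)
  have "0 \<le> (a - P) \<bullet> (a - P)" by simp
  also have "\<dots> = a \<bullet> a - (\<Sum>k\<in>K. (c k)^2)"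
    by (simp add: inner_diff_left inner_diff_right inner_commute[of P a] aP PP)
  finally show ?thesis by (simp add: c_def)
qed

lemma inner_matrix_vector_mult_svd:
  assumes "is_svd X K s u v"
  shows "c \<bullet> (X *v w) = (\<Sum>k\<in>K. s k * ((u k \<bullet> c) * (v k \<bullet> w)))"
  using assms unfolding is_svd_def inner_matrix_vector_mult
  by (simp add: inner_sum_left inner_outer)

lemma op_norm_le_1_sum_outer:
  fixes u :: "nat \<Rightarrow> real^'m" and v :: "nat \<Rightarrow> real^'n"
  assumes fin: "finite K"
    and ou: "\<forall>k\<in>K. \<forall>l\<in>K. u k \<bullet> u l = (if k = l then 1 else 0)"
    and ov: "\<forall>k\<in>K. \<forall>l\<in>K. v k \<bullet> v l = (if k = l then 1 else 0)"
  shows "op_norm_le_1 (\<Sum>k\<in>K. outer (u k) (v k))"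
  unfolding op_norm_le_1_def
proof (intro allI impI)
  fix a :: "real^'m" and b :: "real^'n" assume a: "norm a = 1" and b: "norm b = 1"
  have "a \<bullet> ((\<Sum>k\<in>K. outer (u k) (v k)) *v b) = (\<Sum>k\<in>K. (u k \<bullet> a) * (v k \<bullet> b))"
    unfolding inner_matrix_vector_mult by (simp add: inner_sum_left inner_outer)
  also have "\<dots> \<le> (\<Sum>k\<in>K. ((u k \<bullet> a)^2 + (v k \<bullet> b)^2) / 2)"
  proof (rule sum_mono)
    fix k show "(u k \<bullet> a) * (v k \<bullet> b) \<le> ((u k \<bullet> a)^2 + (v k \<bullet> b)^2) / 2"
      using sum_squares_bound[of "u k \<bullet> a" "v k \<bullet> b"] by simp
  qed
  also have "\<dots> = ((\<Sum>k\<in>K. (u k \<bullet> a)^2) + (\<Sum>k\<in>K. (v k \<bullet> b)^2)) / 2"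
    by (simp add: sum.distrib sum_divide_distrib[symmetric])
  also have "\<dots> \<le> (a \<bullet> a + b \<bullet> b) / 2"
    using bessel_inequality[OF fin ou, of a] bessel_inequality[OF fin ov, of b] by simp
  also have "\<dots> = 1" using a b by (simp add: power2_norm_eq_inner[symmetric])
  finally show "a \<bullet> ((\<Sum>k\<in>K. outer (u k) (v k)) *v b) \<le> 1" .
qed

lemma nuclear_sup_svd:
  assumes svd: "is_svd (X::real^'n^'m) K s u v"
  shows "nuclear_sup X = sum s K"
proof (rule antisym)
  have fin: "finite K" and sp: "\<forall>k\<in>K. s k > 0"
    and ou: "\<forall>k\<in>K. \<forall>l\<in>K. u k \<bullet> u l = (if k = l then 1 else 0)"
    and ov: "\<forall>k\<in>K. \<forall>l\<in>K. v k \<bullet> v l = (if k = l then 1 else 0)"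
    and X: "X = (\<Sum>k\<in>K. s k *\<^sub>R outer (u k) (v k))"
    using svd by (auto simp: is_svd_def)
  show "nuclear_sup X \<le> sum s K"
  proof (rule nuclear_sup_least)
    fix W :: "real^'n^'m" assume W: "op_norm_le_1 W"
    have "norm (u k) = 1" "norm (v k) = 1" if "k \<in> K" for k
      using ou ov that by (simp_all add: norm_eq_sqrt_inner)
    then have "u k \<bullet> (W *v v k) \<le> 1" if "k \<in> K" for k
      using W that unfolding op_norm_le_1_def by blast
    then have "(\<Sum>k\<in>K. s k * (u k \<bullet> (W *v v k))) \<le> (\<Sum>k\<in>K. s k * 1)"
      using sp by (intro sum_mono mult_left_mono) (auto intro: less_imp_le)
    moreover have "X \<bullet> W = (\<Sum>k\<in>K. s k * (u k \<bullet> (W *v v k)))"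
      unfolding X inner_matrix_vector_mult by (simp add: inner_sum_left inner_commute[of W])
    ultimately show "X \<bullet> W \<le> sum s K" by simp
  qed
  have "X \<bullet> (\<Sum>k\<in>K. outer (u k) (v k)) = (\<Sum>k\<in>K. \<Sum>l\<in>K. s l * ((u l \<bullet> u k) * (v l \<bullet> v k)))"
    unfolding X by (simp add: inner_sum_left inner_sum_right inner_outer)
  also have "\<dots> = (\<Sum>k\<in>K. \<Sum>l\<in>K. if k = l then s k else 0)"
    using ou ov by (intro sum.cong refl) auto
  also have "\<dots> = sum s K" using fin by simp
  finally show "sum s K \<le> nuclear_sup X"
    using nuclear_sup_upper[OF op_norm_le_1_sum_outer[OF fin ou ov], of X] by simp
qed

lemma norm_le_if_inner_unit_le:
  fixes w :: "'a::real_inner"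
  assumes "\<And>x. norm x = 1 \<Longrightarrow> x \<bullet> w \<le> c" and "0 \<le> c"
  shows "norm w \<le> c"
proof (cases "w = 0")
  case False
  then have "((1 / norm w) *\<^sub>R w) \<bullet> w = norm w"
    by (simp add: power2_norm_eq_inner[symmetric] power2_eq_square)
  then show ?thesis using assms(1)[of "(1 / norm w) *\<^sub>R w"] False by simp
qed (use assms in simp)

lemma eq_scaleR_if_inner_attains_norm_bound:
  fixes w :: "'a::real_inner"
  assumes "norm x = 1" "norm w \<le> c" "x \<bullet> w = c"
  shows "w = c *\<^sub>R x"
proof -
  have "x \<bullet> w \<le> norm x * norm w" by (rule norm_cauchy_schwarz)
  then have "norm w = c" using assms by simp
  then have "x \<bullet> w = norm x * norm w" using assms by simp
  then have "norm x *\<^sub>R w = norm w *\<^sub>R x" by (simp only: norm_cauchy_schwarz_eq)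
  then show ?thesis using assms \<open>norm w = c\<close> by simp
qed

text \<open>A maximiser \<open>(a, b)\<close> of \<open>a \<bullet> (X *v b)\<close> over pairs of unit vectors is a pair of
  singular vectors for the largest singular value.\<close>

lemma top_singular_pair:
  fixes X :: "real^'n^'m"
  assumes "X \<noteq> 0"
  obtains s a b where "s > 0" "norm a = 1" "norm b = 1" "X *v b = s *\<^sub>R a"
    "\<And>w. a \<bullet> (X *v w) = s * (b \<bullet> w)"
proof -
  define S where "S = sphere (0::real^'m) 1 \<times> sphere (0::real^'n) 1"
  have "compact S" unfolding S_def by (intro compact_Times compact_sphere)
  moreover have "(axis undefined 1, axis undefined 1) \<in> S" unfolding S_def by (simp add: norm_axis_1)
  moreover have "continuous_on S (\<lambda>p. fst p \<bullet> (X *v snd p))"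
    using linear_continuous_on[OF matrix_vector_mul_linear[THEN linear_conv_bounded_linear[THEN iffD1]]]
    by (intro continuous_intros continuous_on_compose2[of UNIV "(*v) X"]) auto
  ultimately obtain p where pS: "p \<in> S" and pmax: "\<forall>q\<in>S. fst q \<bullet> (X *v snd q) \<le> fst p \<bullet> (X *v snd p)"
    using continuous_attains_sup[of S] by blast
  define a b where "a = fst p" and "b = snd p"
  define s where "s = a \<bullet> (X *v b)"
  have na: "norm a = 1" and nb: "norm b = 1" using pS by (auto simp: S_def a_def b_def)
  have mx: "a' \<bullet> (X *v b') \<le> s" if "norm a' = 1" "norm b' = 1" for a' b'
    using pmax[rule_format, of "(a', b')"] that by (simp add: S_def a_def b_def s_def)
  obtain i where "X$i \<noteq> 0" using assms by (metis vec_eq_iff zero_index)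
  then obtain j where ij: "X$i$j \<noteq> 0" by (metis vec_eq_iff zero_index)
  have "X$i$j \<le> s" "- X$i$j \<le> s"
    using mx[of "axis i 1" "axis j 1"] mx[of "- axis i 1" "axis j 1"]
    by (simp_all add: inner_axis_matrix_vector_mult norm_axis_1 inner_minus_left)
  then have spos: "s > 0" using ij by linarith
  have Xb: "X *v b = s *\<^sub>R a"
  proof (rule eq_scaleR_if_inner_attains_norm_bound[OF na])
    show "norm (X *v b) \<le> s"
      by (rule norm_le_if_inner_unit_le) (use mx nb spos in auto)
  qed (simp add: s_def)
  have "a v* X = s *\<^sub>R b"
  proof (rule eq_scaleR_if_inner_attains_norm_bound[OF nb])
    show "norm (a v* X) \<le> s"
      by (rule norm_le_if_inner_unit_le)
        (use mx na spos in \<open>auto simp: inner_commute[of _ "a v* X"] dot_lmul_matrix\<close>)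
    show "b \<bullet> (a v* X) = s" by (simp add: s_def inner_commute[of b] dot_lmul_matrix)
  qed
  then have "a \<bullet> (X *v w) = s * (b \<bullet> w)" for w by (metis dot_lmul_matrix inner_scaleR_left)
  then show ?thesis using that[OF spos na nb Xb] by blast
qed

lemma svd_singular_value_apply:
  assumes svd: "is_svd X K s u v" and l: "l \<in> K"
  shows "a \<bullet> (X *v v l) = s l * (u l \<bullet> a)" and "u l \<bullet> (X *v b) = s l * (v l \<bullet> b)"
proof -
  have fin: "finite K"
    and ou: "\<forall>k\<in>K. \<forall>l\<in>K. u k \<bullet> u l = (if k = l then 1 else 0)"
    and ov: "\<forall>k\<in>K. \<forall>l\<in>K. v k \<bullet> v l = (if k = l then 1 else 0)"
    using svd by (simp_all add: is_svd_def)
  have "a \<bullet> (X *v v l) = (\<Sum>k\<in>K. if k = l then s l * (u l \<bullet> a) else 0)"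
    unfolding inner_matrix_vector_mult_svd[OF svd] using ov l by (intro sum.cong refl) auto
  then show "a \<bullet> (X *v v l) = s l * (u l \<bullet> a)" using fin l by simp
  have "u l \<bullet> (X *v b) = (\<Sum>k\<in>K. if k = l then s l * (v l \<bullet> b) else 0)"
    unfolding inner_matrix_vector_mult_svd[OF svd] using ou l by (intro sum.cong refl) auto
  then show "u l \<bullet> (X *v b) = s l * (v l \<bullet> b)" using fin l by simp
qed

lemma svd_left_vectors_orthogonal:
  assumes svd: "is_svd X K s u v" and "\<And>w. a \<bullet> (X *v w) = 0" and l: "l \<in> K"
  shows "u l \<bullet> a = 0"
proof -
  have "s l * (u l \<bullet> a) = 0" using svd_singular_value_apply(1)[OF svd l, of a] assms(2) by simp
  moreover have "s l > 0" using svd l by (simp add: is_svd_def)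
  ultimately show ?thesis by simp
qed

lemma svd_right_vectors_orthogonal:
  assumes svd: "is_svd X K s u v" and "X *v b = 0" and l: "l \<in> K"
  shows "v l \<bullet> b = 0"
proof -
  have "s l * (v l \<bullet> b) = 0" using svd_singular_value_apply(2)[OF svd l, of b] assms(2) by simp
  moreover have "s l > 0" using svd l by (simp add: is_svd_def)
  ultimately show ?thesis by simp
qed

lemma is_svd_add_outer:
  assumes svd: "is_svd X K s u v" and k0: "k0 \<notin> K" and cpos: "c > 0"
    and na: "norm a = 1" and nb: "norm b = 1"
    and ua: "\<And>l. l \<in> K \<Longrightarrow> u l \<bullet> a = 0" and vb: "\<And>l. l \<in> K \<Longrightarrow> v l \<bullet> b = 0"
  shows "is_svd (X + c *\<^sub>R outer a b) (insert k0 K) (s(k0 := c)) (u(k0 := a)) (v(k0 := b))"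
  unfolding is_svd_def
proof (intro conjI ballI)
  have fin: "finite K" and sp: "\<forall>k\<in>K. s k > 0"
    and ou: "\<forall>k\<in>K. \<forall>l\<in>K. u k \<bullet> u l = (if k = l then 1 else 0)"
    and ov: "\<forall>k\<in>K. \<forall>l\<in>K. v k \<bullet> v l = (if k = l then 1 else 0)"
    using svd by (auto simp: is_svd_def)
  have aa: "a \<bullet> a = 1" and bb: "b \<bullet> b = 1"
    using na nb by (simp_all add: power2_norm_eq_inner[symmetric])
  show "finite (insert k0 K)" using fin by simp
  fix k assume k: "k \<in> insert k0 K"
  then show "(s(k0 := c)) k > 0" using sp cpos by auto
  fix l assume l: "l \<in> insert k0 K"
  show "(u(k0 := a)) k \<bullet> (u(k0 := a)) l = (if k = l then 1 else 0)"
    using k l ou ua aa k0 by (auto simp: inner_commute)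
  show "(v(k0 := b)) k \<bullet> (v(k0 := b)) l = (if k = l then 1 else 0)"
    using k l ov vb bb k0 by (auto simp: inner_commute)
next
  have fin: "finite K" and X: "X = (\<Sum>k\<in>K. s k *\<^sub>R outer (u k) (v k))"
    using svd by (simp_all add: is_svd_def)
  have "(\<Sum>k\<in>K. (s(k0 := c)) k *\<^sub>R outer ((u(k0 := a)) k) ((v(k0 := b)) k)) = X"
    unfolding X using k0 by (intro sum.cong refl) auto
  then show "X + c *\<^sub>R outer a b
      = (\<Sum>k\<in>insert k0 K. (s(k0 := c)) k *\<^sub>R outer ((u(k0 := a)) k) ((v(k0 := b)) k))"
    using fin k0 by (simp add: add.commute)
qed

lemma deflate_singular_pair:
  fixes X :: "real^'n^'m"
  assumes cpos: "c > 0" and na: "norm a = 1" and nb: "norm b = 1"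
    and Xb: "X *v b = c *\<^sub>R a" and aX: "\<And>w. a \<bullet> (X *v w) = c * (b \<bullet> w)"
  defines "X' \<equiv> X - c *\<^sub>R outer a b"
  shows "\<And>w. a \<bullet> (X' *v w) = 0" and "X' *v b = 0"
    and "dim {x. X *v x = 0} < dim {x. X' *v x = 0}"
proof -
  have aa: "a \<bullet> a = 1" and bb: "b \<bullet> b = 1"
    using na nb by (simp_all add: power2_norm_eq_inner[symmetric])
  have X'_apply: "d \<bullet> (X' *v w) = d \<bullet> (X *v w) - c * ((a \<bullet> d) * (b \<bullet> w))" for d w
    unfolding inner_matrix_vector_mult X'_def by (simp add: inner_diff_left inner_outer)
  show "a \<bullet> (X' *v w) = 0" for w using X'_apply[of a w] aX aa by simp
  have "d \<bullet> (X' *v b) = 0" for d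
    using X'_apply[of d b] Xb bb by (simp add: inner_commute[of d a])
  then show X'b: "X' *v b = 0" by (metis inner_eq_zero_iff)
  \<comment> \<open>deflation keeps \<open>ker X\<close> and adds \<open>b\<close>\<close>
  have "X' *v x = 0" if "X *v x = 0" for x
  proof -
    have "b \<bullet> x = 0" using aX[of x] that cpos by simp
    then show ?thesis using X'_apply[of "X' *v x" x] that by simp
  qed
  moreover have "X *v b \<noteq> 0" using Xb cpos na by auto
  ultimately have "{x. X *v x = 0} \<subset> {x. X' *v x = 0}" using X'b by blast
  moreover have "span {x. M *v x = 0} = {x. M *v x = 0}" for M :: "real^'n^'m"
    by (simp add: span_eq_iff linear_subspace_kernel[OF matrix_vector_mul_linear])
  ultimately show "dim {x. X *v x = 0} < dim {x. X' *v x = 0}" by (metis dim_psubset)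
qed

lemma svd_exists: "\<exists>K s u v. is_svd (X::real^'n^'m) K s u v"
proof (induction "CARD('n) - dim {x. X *v x = 0}" arbitrary: X rule: less_induct)
  case less
  show ?case
  proof (cases "X = 0")
    case True
    then have "is_svd X {} (\<lambda>_. 0) (\<lambda>_. 0) (\<lambda>_. 0)" by (simp add: is_svd_def)
    then show ?thesis by blast
  next
    case False
    obtain c a b where cpos: "c > 0" and na: "norm a = 1" and nb: "norm b = 1"
      and Xb: "X *v b = c *\<^sub>R a" and aX: "\<And>w. a \<bullet> (X *v w) = c * (b \<bullet> w)"
      by (rule top_singular_pair[OF False]) (rule that)
    define X' where "X' = X - c *\<^sub>R outer a b"
    note deflate = deflate_singular_pair[OF cpos na nb Xb aX, folded X'_def]
    have "dim {x. X' *v x = 0} \<le> CARD('n)" by (rule dim_subset_UNIV_cart)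
    then have "CARD('n) - dim {x. X' *v x = 0} < CARD('n) - dim {x. X *v x = 0}"
      using deflate(3) by linarith
    then obtain K s u v where svd': "is_svd X' K s u v" using less by blast
    have "finite K" using svd' by (simp add: is_svd_def)
    then obtain k0 :: nat where k0: "k0 \<notin> K" using ex_new_if_finite[OF infinite_UNIV_nat] by blast
    have "is_svd (X' + c *\<^sub>R outer a b) (insert k0 K) (s(k0 := c)) (u(k0 := a)) (v(k0 := b))"
      by (rule is_svd_add_outer[OF svd' k0 cpos na nb svd_left_vectors_orthogonal[OF svd' deflate(1)]
            svd_right_vectors_orthogonal[OF svd' deflate(2)]])
    then show ?thesis unfolding X'_def by auto
  qed
qed

lemma nuclear_norm_eq_nuclear_sup: "nuclear_norm (X::real^'n^'m) = nuclear_sup X"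
proof -
  obtain K s u v where svd: "is_svd X K s u v" using svd_exists by blast
  show ?thesis unfolding nuclear_norm_def
  proof (rule the_equality)
    show "\<exists>K s u v. is_svd X K s u v \<and> nuclear_sup X = sum s K"
      using svd nuclear_sup_svd by blast
  qed (use nuclear_sup_svd in metis)
qed

section \<open>Proximal maps\<close>

lemma nonneg_if_ge_neg_linear_near_0:
  fixes D M :: real
  assumes "\<And>t. 0 < t \<Longrightarrow> t < 1 \<Longrightarrow> - (t * M) \<le> D"
  shows "0 \<le> D"
proof -
  define t where "t n = inverse (real (Suc n)) / 2" for n
  have "- (t n * M) \<le> D" for n by (rule assms) (simp_all add: t_def field_simps)
  moreover have "(\<lambda>n. - (t n * M)) \<longlonglongrightarrow> - (0 / 2 * M)"
    unfolding t_def by (intro tendsto_intros LIMSEQ_inverse_real_of_nat) simp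
  ultimately have "- (0 / 2 * M) \<le> D" using LIMSEQ_le_const2 by blast
  then show ?thesis by simp
qed

lemma norm_add_scaleR_power2:
  fixes a b :: "'a::real_inner"
  shows "norm (a + t *\<^sub>R b)^2 = norm a^2 + 2*t*(a \<bullet> b) + t^2 * norm b^2"
  unfolding power2_norm_eq_inner
  by (simp add: inner_add_left inner_add_right algebra_simps power2_eq_square inner_commute)

text \<open>Compare with the points \<open>x + t (y - x)\<close>: convexity gives
  \<open>t (\<phi> x + L - \<phi> y) \<le> t\<^sup>2 M\<close>, then let \<open>t \<rightarrow> 0\<close>.\<close>

lemma convex_minimizer_first_order:
  fixes \<phi> q :: "'a::real_vector \<Rightarrow> real"
  assumes cv: "convex_on UNIV \<phi>" and mn: "\<And>y. \<phi> x + q x \<le> \<phi> y + q y"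
    and qb: "\<And>t. 0 < t \<Longrightarrow> t < 1 \<Longrightarrow> q (x + t *\<^sub>R (y - x)) \<le> q x - t * L + t^2 * M"
  shows "\<phi> x + L \<le> \<phi> y"
proof -
  have "- (t * M) \<le> \<phi> y - \<phi> x - L" if t: "0 < t" "t < 1" for t
  proof -
    have "\<phi> (x + t *\<^sub>R (y - x)) \<le> \<phi> x - t * \<phi> x + t * \<phi> y"
      using convex_onD[OF cv, of t x y] t by (simp add: algebra_simps)
    moreover have "\<phi> x + q x \<le> \<phi> (x + t *\<^sub>R (y - x)) + q (x + t *\<^sub>R (y - x))" by (rule mn)
    ultimately have "t * \<phi> x \<le> t * \<phi> y - t * L + t^2 * M" using qb[OF t] by linarith
    then have "t * \<phi> x \<le> t * (\<phi> y - L + t * M)" by (simp add: algebra_simps power2_eq_square)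
    then have "\<phi> x \<le> \<phi> y - L + t * M" using t by simp
    then show ?thesis by linarith
  qed
  then show ?thesis using nonneg_if_ge_neg_linear_near_0[of M "\<phi> y - \<phi> x - L"] by simp
qed

lemma prox_variational_inequality:
  fixes \<phi> :: "'a::real_inner \<Rightarrow> real"
  assumes cv: "convex_on UNIV \<phi>" and mn: "\<And>y. \<phi> x + k * norm (c - x)^2 \<le> \<phi> y + k * norm (c - y)^2"
  shows "\<phi> x + 2 * k * ((c - x) \<bullet> (y - x)) \<le> \<phi> y"
proof (rule convex_minimizer_first_order[OF cv mn])
  fix t :: real
  have "c - (x + t *\<^sub>R (y - x)) = (c - x) + (- t) *\<^sub>R (y - x)" by (simp add: algebra_simps)
  then show "k * norm (c - (x + t *\<^sub>R (y - x)))^2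
      \<le> k * norm (c - x)^2 - t * (2 * k * ((c - x) \<bullet> (y - x))) + t^2 * (k * norm (y - x)^2)"
    by (simp only: norm_add_scaleR_power2) (simp add: algebra_simps)
qed

lemma continuous_attains_min_if_sublevel_bounded:
  fixes h :: "'a::euclidean_space \<Rightarrow> real"
  assumes ch: "continuous_on UNIV h" and R: "\<And>x. h x \<le> h a \<Longrightarrow> norm x \<le> R"
  obtains x where "\<And>y. h x \<le> h y"
proof -
  have a: "a \<in> cball 0 R" using R by auto
  then obtain x where "x \<in> cball 0 R" and xm: "\<forall>y\<in>cball 0 R. h x \<le> h y"
    using continuous_attains_inf[of "cball 0 R" h] continuous_on_subset[OF ch]
    by (metis compact_cball empty_iff subset_UNIV)
  moreover have "h x \<le> h y" if "y \<notin> cball 0 R" for y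
  proof -
    have "h a < h y" using R[of y] that by fastforce
    moreover have "h x \<le> h a" using xm a by blast
    ultimately show ?thesis by simp
  qed
  ultimately show ?thesis using that by blast
qed

lemma le_1_plus_if_power2_le: fixes x a :: real assumes "0 \<le> x" "x^2 \<le> a" shows "x \<le> 1 + a"
proof (cases "x \<le> 1")
  case True then show ?thesis using assms by (smt (verit) zero_le_power2)
next
  case False then have "x \<le> x^2" by (simp add: power2_eq_square)
  then show ?thesis using assms by linarith
qed

lemma nuclear_prox_exists:
  fixes c :: "real^'n^'m"
  assumes mu: "\<mu> > 0"
  obtains Y where "\<And>Z. nuclear_sup Y + 1 / (2*\<mu>) * norm (Y - c)^2 \<le> nuclear_sup Z + 1 / (2*\<mu>) * norm (Z - c)^2"
proof (rule continuous_attains_min_if_sublevel_bounded)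
  show "continuous_on UNIV (\<lambda>Y. nuclear_sup Y + 1 / (2*\<mu>) * norm (Y - c)^2)"
    by (intro continuous_intros continuous_on_nuclear_sup)
  fix Y assume "nuclear_sup Y + 1 / (2*\<mu>) * norm (Y - c)^2 \<le> nuclear_sup c + 1 / (2*\<mu>) * norm (c - c)^2"
  then have "1 / (2*\<mu>) * norm (Y - c)^2 \<le> nuclear_sup c" using nuclear_sup_nonneg[of Y] by simp
  then have "norm (Y - c)^2 \<le> 2*\<mu> * nuclear_sup c" using mu by (simp add: field_simps)
  then have "norm (Y - c) \<le> 1 + 2*\<mu> * nuclear_sup c" by (intro le_1_plus_if_power2_le) auto
  then show "norm Y \<le> norm c + (1 + 2*\<mu> * nuclear_sup c)" using norm_triangle_sub[of Y c] by linarith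
qed (use that in blast)

lemma svt_variational_inequality:
  fixes c :: "real^'n^'m"
  assumes mu: "\<mu> > 0"
  shows "nuclear_sup (svt \<mu> c) + (1/\<mu>) * ((c - svt \<mu> c) \<bullet> (Z - svt \<mu> c)) \<le> nuclear_sup Z"
proof -
  have vi: "nuclear_sup Y + (1/\<mu>) * ((c - Y) \<bullet> (Z' - Y)) \<le> nuclear_sup Z'"
    if "\<And>Z. nuclear_sup Y + 1 / (2*\<mu>) * norm (Y - c)^2 \<le> nuclear_sup Z + 1 / (2*\<mu>) * norm (Z - c)^2"
    for Y Z'
  proof -
    have "nuclear_sup Y + 1 / (2*\<mu>) * norm (c - Y)^2 \<le> nuclear_sup Z + 1 / (2*\<mu>) * norm (c - Z)^2" for Z
      using that[of Z] by (simp only: norm_minus_commute)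
    then have "nuclear_sup Y + 2 * (1 / (2*\<mu>)) * ((c - Y) \<bullet> (Z' - Y)) \<le> nuclear_sup Z'"
      by (rule prox_variational_inequality[OF convex_on_nuclear_sup])
    then show ?thesis by simp
  qed
  obtain Y0 where Y0: "\<And>Z. nuclear_sup Y0 + 1 / (2*\<mu>) * norm (Y0 - c)^2 \<le> nuclear_sup Z + 1 / (2*\<mu>) * norm (Z - c)^2"
    using nuclear_prox_exists[OF mu] by blast
  have "svt \<mu> c = Y0"
    unfolding svt_def nuclear_norm_eq_nuclear_sup
  proof (rule the_equality)
    fix Y1 assume "\<forall>Z. nuclear_sup Y1 + 1 / (2*\<mu>) * norm (Y1 - c)^2 \<le> nuclear_sup Z + 1 / (2*\<mu>) * norm (Z - c)^2"
    then have "nuclear_sup Y1 + (1/\<mu>) * ((c - Y1) \<bullet> (Y0 - Y1)) \<le> nuclear_sup Y0" by (intro vi) blast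
    moreover have "nuclear_sup Y0 + (1/\<mu>) * ((c - Y0) \<bullet> (Y1 - Y0)) \<le> nuclear_sup Y1" by (rule vi[OF Y0])
    ultimately have "(1/\<mu>) * ((c - Y1) \<bullet> (Y0 - Y1) + (c - Y0) \<bullet> (Y1 - Y0)) \<le> 0"
      by (simp add: algebra_simps)
    moreover have "(c - Y1) \<bullet> (Y0 - Y1) + (c - Y0) \<bullet> (Y1 - Y0) = (Y1 - Y0) \<bullet> (Y1 - Y0)"
      by (simp add: inner_diff_left inner_diff_right inner_commute algebra_simps)
    ultimately have "(Y1 - Y0) \<bullet> (Y1 - Y0) \<le> 0" using mu by (simp add: divide_le_0_iff)
    then show "Y1 = Y0" by (metis inner_gt_zero_iff not_less right_minus_eq)
  qed (use Y0 in blast)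
  then show ?thesis using vi[OF Y0] by simp
qed

lemma svt_nonexpansive:
  fixes a b :: "real^'n^'m"
  assumes mu: "\<mu> > 0"
  shows "norm (svt \<mu> a - svt \<mu> b) \<le> norm (a - b)"
proof -
  define A B where "A = svt \<mu> a" and "B = svt \<mu> b"
  have "(1/\<mu>) * ((a - A) \<bullet> (B - A) + (b - B) \<bullet> (A - B)) \<le> 0"
    using svt_variational_inequality[OF mu, of a B] svt_variational_inequality[OF mu, of b A]
    unfolding A_def[symmetric] B_def[symmetric] by (simp add: algebra_simps)
  then have "(a - A) \<bullet> (B - A) + (b - B) \<bullet> (A - B) \<le> 0" using mu by (simp add: divide_le_0_iff)
  moreover have "(a - A) \<bullet> (B - A) + (b - B) \<bullet> (A - B) = (A - B) \<bullet> (A - B) - (a - b) \<bullet> (A - B)"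
    by (simp add: inner_diff_left inner_diff_right inner_commute algebra_simps)
  ultimately have "norm (A - B) * norm (A - B) \<le> (a - b) \<bullet> (A - B)"
    by (simp add: power2_norm_eq_inner[symmetric] power2_eq_square)
  also have "\<dots> \<le> norm (a - b) * norm (A - B)" by (rule norm_cauchy_schwarz)
  finally show ?thesis unfolding A_def B_def
    by (metis mult_right_le_imp_le norm_ge_zero order_le_less)
qed

lemma continuous_on_svt: "\<mu> > 0 \<Longrightarrow> continuous_on S (svt \<mu> :: real^'n^'m \<Rightarrow> _)"
  by (rule lipschitz_on_continuous_on[of 1], rule lipschitz_onI) (auto simp: dist_norm svt_nonexpansive)

lemma soft_scalar_variational_inequality:
  fixes x e' \<mu> :: real
  assumes mu: "0 \<le> \<mu>"
  defines "e \<equiv> sgn x * max (\<bar>x\<bar> - \<mu>) 0"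
  shows "\<mu> * \<bar>e\<bar> + (x - e) * (e' - e) \<le> \<mu> * \<bar>e'\<bar>"
proof (cases "\<bar>x\<bar> \<le> \<mu>")
  case True
  have "x * e' \<le> \<bar>x\<bar> * \<bar>e'\<bar>" by (simp add: abs_mult[symmetric])
  also have "\<dots> \<le> \<mu> * \<bar>e'\<bar>" using True by (simp add: mult_right_mono)
  finally have "x * e' \<le> \<mu> * \<bar>e'\<bar>" .
  then show ?thesis using True by (simp add: e_def)
next
  case False
  then have xe: "x - e = sgn x * \<mu>" and ae: "\<bar>e\<bar> = sgn x * e"
    by (cases "x > 0"; auto simp: e_def sgn_if)+
  have "\<mu> * \<bar>e\<bar> + (x - e) * (e' - e) = sgn x * (\<mu> * e')"
    by (simp only: xe ae) (simp add: algebra_simps)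
  also have "\<dots> \<le> \<mu> * \<bar>e'\<bar>"
    using mu by (simp add: sgn_if abs_if mult_left_mono mult_nonneg_nonpos)
  finally show ?thesis .
qed

lemma soft_variational_inequality:
  fixes c E' :: "real^'n^'m"
  assumes mu: "0 \<le> \<mu>"
  shows "\<mu> * l1_norm (soft \<mu> c) + (c - soft \<mu> c) \<bullet> (E' - soft \<mu> c) \<le> \<mu> * l1_norm E'"
proof -
  have "\<mu> * l1_norm (soft \<mu> c) + (c - soft \<mu> c) \<bullet> (E' - soft \<mu> c)
      = (\<Sum>i\<in>UNIV. \<Sum>j\<in>UNIV. \<mu> * \<bar>soft \<mu> c$i$j\<bar> + (c$i$j - soft \<mu> c$i$j) * (E'$i$j - soft \<mu> c$i$j))"
    by (simp add: l1_norm_def inner_matrix sum_distrib_left sum.distrib)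
  also have "\<dots> \<le> (\<Sum>i\<in>UNIV. \<Sum>j\<in>UNIV. \<mu> * \<bar>E'$i$j\<bar>)"
    unfolding soft_def using mu by (intro sum_mono) (simp add: soft_scalar_variational_inequality)
  also have "\<dots> = \<mu> * l1_norm E'" by (simp add: l1_norm_def sum_distrib_left)
  finally show ?thesis .
qed

lemma continuous_on_soft:
  assumes "0 \<le> \<mu>" shows "continuous_on S (soft \<mu> :: real^'n^'m \<Rightarrow> _)"
proof -
  have "soft \<mu> = (\<lambda>X::real^'n^'m. \<chi> i j. max (X$i$j - \<mu>) 0 + min (X$i$j + \<mu>) 0)"
    using assms by (intro ext) (auto simp: soft_def vec_eq_iff sgn_if max_def min_def)
  then show ?thesis by (simp add: continuous_on_vec_lambda continuous_intros)
qed

section \<open>Relaxed fixed-point iterations\<close>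

definition firmly_quasi_nonexpansive_at :: "('a::real_inner \<Rightarrow> 'a) \<Rightarrow> 'a \<Rightarrow> bool" where
  "firmly_quasi_nonexpansive_at F q \<longleftrightarrow> (\<forall>x. 0 \<le> (F x - q) \<bullet> (x - F x))"

lemma relaxed_step_fejer:
  assumes fq: "firmly_quasi_nonexpansive_at F q" and r: "0 \<le> \<rho>"
  shows "norm (x + \<rho> *\<^sub>R (F x - x) - q)^2 \<le> norm (x - q)^2 - \<rho> * (2 - \<rho>) * norm (x - F x)^2"
proof -
  define d e where "d = x - F x" and "e = x - q"
  have "0 \<le> (F x - q) \<bullet> d" using fq by (simp add: firmly_quasi_nonexpansive_at_def d_def)
  moreover have "e \<bullet> d = d \<bullet> d + (F x - q) \<bullet> d"
    by (simp add: d_def e_def inner_diff_left inner_diff_right algebra_simps)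
  ultimately have ed: "\<rho> * (d \<bullet> d) \<le> \<rho> * (e \<bullet> d)" using r by (simp add: mult_left_mono)
  have step: "x + \<rho> *\<^sub>R (F x - x) - q = e + (- \<rho>) *\<^sub>R d" by (simp add: d_def e_def algebra_simps)
  have "norm (x + \<rho> *\<^sub>R (F x - x) - q)^2 = norm e^2 - 2 * \<rho> * (e \<bullet> d) + \<rho>^2 * (d \<bullet> d)"
    unfolding step norm_add_scaleR_power2 power2_norm_eq_inner[of d] by simp
  also have "\<dots> \<le> norm e^2 - 2 * \<rho> * (d \<bullet> d) + \<rho>^2 * (d \<bullet> d)" using ed by linarith
  also have "\<dots> = norm (x - q)^2 - \<rho> * (2 - \<rho>) * norm (x - F x)^2"
    unfolding d_def[symmetric] e_def[symmetric] power2_norm_eq_inner[of d]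
    by (simp add: algebra_simps power2_eq_square)
  finally show ?thesis .
qed

lemma LIMSEQ_if_dist_decseq_and_subseq:
  fixes s :: "nat \<Rightarrow> 'a::real_normed_vector"
  assumes dec: "decseq (\<lambda>k. norm (s k - l))" and r: "strict_mono r" and sl: "(s \<circ> r) \<longlonglongrightarrow> l"
  shows "s \<longlonglongrightarrow> l"
proof -
  obtain L where L: "(\<lambda>k. norm (s k - l)) \<longlonglongrightarrow> L"
    using decseq_convergent[OF dec, of 0] by auto
  have "(\<lambda>j. norm (s (r j) - l)) \<longlonglongrightarrow> L" using LIMSEQ_subseq_LIMSEQ[OF L r] by (simp add: o_def)
  moreover have "(\<lambda>j. norm (s (r j) - l)) \<longlonglongrightarrow> 0"
    using sl by (simp add: o_def LIM_zero tendsto_norm_zero_iff)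
  ultimately have "L = 0" using LIMSEQ_unique by blast
  then show ?thesis using L by (simp add: tendsto_norm_zero_iff LIM_zero_iff)
qed

locale relaxed_iteration =
  fixes F :: "'a::euclidean_space \<Rightarrow> 'a" and \<rho> :: real and s :: "nat \<Rightarrow> 'a"
  assumes step: "\<And>k. s (Suc k) = s k + \<rho> *\<^sub>R (F (s k) - s k)"
    and rho: "0 < \<rho>" "\<rho> < 2"
begin

lemma fejer:
  assumes "firmly_quasi_nonexpansive_at F q"
  shows "norm (s (Suc k) - q)^2 \<le> norm (s k - q)^2 - \<rho> * (2 - \<rho>) * norm (s k - F (s k))^2"
  using relaxed_step_fejer[OF assms, of \<rho> "s k"] rho by (simp add: step)

lemma dist_decseq:
  assumes "firmly_quasi_nonexpansive_at F q"
  shows "decseq (\<lambda>k. norm (s k - q))"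
proof (rule decseq_SucI)
  fix k
  have "0 \<le> \<rho> * (2 - \<rho>) * norm (s k - F (s k))^2" using rho by simp
  then have "norm (s (Suc k) - q)^2 \<le> norm (s k - q)^2" using fejer[OF assms, of k] by linarith
  then show "norm (s (Suc k) - q) \<le> norm (s k - q)" by (simp add: power_mono_iff)
qed

lemma residual_tendsto_0:
  assumes "firmly_quasi_nonexpansive_at F q"
  shows "(\<lambda>k. s k - F (s k)) \<longlonglongrightarrow> 0"
proof -
  define c where "c = \<rho> * (2 - \<rho>)"
  have c: "c > 0" using rho by (simp add: c_def)
  have tel: "c * (\<Sum>k<n. norm (s k - F (s k))^2) \<le> norm (s 0 - q)^2 - norm (s n - q)^2" for n
  proof (induction n)
    case (Suc n)
    then show ?case using fejer[OF assms, of n] unfolding c_def[symmetric] by (simp add: algebra_simps)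
  qed simp
  have "summable (\<lambda>k. norm (s k - F (s k))^2)"
  proof (rule summableI_nonneg_bounded)
    fix n
    have "c * (\<Sum>k<n. norm (s k - F (s k))^2) \<le> norm (s 0 - q)^2"
      using tel[of n] by (smt (verit) zero_le_power2)
    then show "(\<Sum>k<n. norm (s k - F (s k))^2) \<le> norm (s 0 - q)^2 / c"
      using c by (simp add: field_simps)
  qed simp
  then have "(\<lambda>k. norm (s k - F (s k))^2) \<longlonglongrightarrow> 0" by (rule summable_LIMSEQ_zero)
  then have "(\<lambda>k. norm (s k - F (s k))) \<longlonglongrightarrow> 0"
    using tendsto_real_sqrt[of "\<lambda>k. norm (s k - F (s k))^2" 0] by simp
  then show ?thesis by (simp add: tendsto_norm_zero_iff)
qed

theorem converges_to_fixed_point: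
  assumes cF: "continuous_on UNIV F" and q0: "firmly_quasi_nonexpansive_at F q0"
    and fixed: "\<And>q. F q = q \<Longrightarrow> firmly_quasi_nonexpansive_at F q"
  obtains q where "s \<longlonglongrightarrow> q" "F q = q"
proof -
  have "norm (s k - q0) \<le> norm (s 0 - q0)" for k
    using dist_decseq[OF q0] by (simp add: decseq_def)
  then have "norm (s k) \<le> norm q0 + norm (s 0 - q0)" for k
    using norm_triangle_sub[of "s k" q0] by (smt (verit) norm_minus_commute)
  then have "bounded (range s)" by (auto simp: bounded_iff)
  then obtain l r where r: "strict_mono r" and sl: "(s \<circ> r) \<longlonglongrightarrow> l"
    using bounded_imp_convergent_subsequence by blast
  have "(\<lambda>j. s (r j) - F (s (r j))) \<longlonglongrightarrow> l - F l"
    using sl continuous_on_tendsto_compose[OF cF sl] by (intro tendsto_intros) (simp_all add: o_def)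
  moreover have "(\<lambda>j. s (r j) - F (s (r j))) \<longlonglongrightarrow> 0"
    using LIMSEQ_subseq_LIMSEQ[OF residual_tendsto_0[OF q0] r] by (simp add: o_def)
  ultimately have fl: "F l = l" using LIMSEQ_unique by fastforce
  have "s \<longlonglongrightarrow> l"
    using LIMSEQ_if_dist_decseq_and_subseq[OF dist_decseq[OF fixed[OF fl]] r sl] .
  then show ?thesis using that fl by blast
qed

end

section \<open>The sGS-ADMM step as a map on a reduced state\<close>

locale sgs_admm =
  fixes B :: "real^'n^'m" and J :: "real^'p \<Rightarrow> real^'n^'m" and lam \<sigma> :: real
  assumes linear_J: "linear J" and bij_normal: "bij (adjoint J \<circ> J)"
    and lam: "lam > 0" and sig: "\<sigma> > 0"
begin

definition normal_inv :: "real^'p \<Rightarrow> real^'p" where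
  "normal_inv = inv (adjoint J \<circ> J)"

definition range_proj :: "real^'n^'m \<Rightarrow> real^'n^'m" where
  "range_proj Z = J (normal_inv (adjoint J Z))"

lemma adjoint_J_J_normal_inv: "adjoint J (J (normal_inv y)) = y"
  using bij_normal unfolding normal_inv_def by (metis bij_def comp_apply surj_f_inv_f)

lemma normal_inv_adjoint_J_J: "normal_inv (adjoint J (J x)) = x"
  using bij_normal unfolding normal_inv_def by (metis bij_def comp_apply inv_f_f)

lemma inner_adjoint_J: "x \<bullet> adjoint J y = J x \<bullet> y"
  using linear_J by (rule adjoint_works)

lemma linear_normal_inv: "linear normal_inv"
  unfolding normal_inv_def using bij_normal
  by (intro inj_linear_imp_inv_linear linear_compose linear_J adjoint_linear) (auto simp: bij_def)

lemma linear_range_proj: "linear range_proj"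
  using linear_compose[OF linear_compose[OF adjoint_linear[OF linear_J] linear_normal_inv] linear_J]
  by (simp add: range_proj_def[abs_def] o_def)

sublocale J: bounded_linear J
  using linear_J by (simp add: linear_conv_bounded_linear)

sublocale J_adj: bounded_linear "adjoint J"
  using adjoint_linear[OF linear_J] by (simp add: linear_conv_bounded_linear)

sublocale normal_inv: bounded_linear normal_inv
  using linear_normal_inv by (simp add: linear_conv_bounded_linear)

sublocale range_proj: bounded_linear range_proj
  using linear_range_proj by (simp add: linear_conv_bounded_linear)

lemma adjoint_J_range_proj: "adjoint J (range_proj Z) = adjoint J Z"
  by (simp add: range_proj_def adjoint_J_J_normal_inv)

lemma inner_range_proj: "range_proj Z \<bullet> W = range_proj Z \<bullet> range_proj W"
  unfolding range_proj_def[of Z] by (simp add: inner_adjoint_J[symmetric] adjoint_J_range_proj)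

lemma range_proj_idem: "range_proj (range_proj Z) = range_proj Z"
  by (simp add: range_proj_def adjoint_J_J_normal_inv)

text \<open>One sweep as a function of the state \<open>(z, p) = (Xt - Yt/\<sigma>, range_proj Et)\<close>: the substeps
  see \<open>Xt\<close> and \<open>Yt\<close> only through \<open>z\<close>, and \<open>Et\<close> only through \<open>adjoint J Et = adjoint J p\<close>.\<close>

definition tau_half :: "real^'n^'m \<Rightarrow> real^'n^'m \<Rightarrow> real^'p" where
  "tau_half z p = - normal_inv (adjoint J (B - z - p))"

definition E_next :: "real^'n^'m \<Rightarrow> real^'n^'m \<Rightarrow> real^'n^'m" where
  "E_next z p = soft (lam/\<sigma>) (B - z + J (tau_half z p))"

definition tau_next :: "real^'n^'m \<Rightarrow> real^'n^'m \<Rightarrow> real^'p" where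
  "tau_next z p = - normal_inv (adjoint J (B - z - E_next z p))"

definition Y_next :: "real^'n^'m \<Rightarrow> real^'n^'m \<Rightarrow> real^'n^'m" where
  "Y_next z p = \<sigma> *\<^sub>R (B - z + J (tau_next z p) - E_next z p)"

definition X_next :: "real^'n^'m \<Rightarrow> real^'n^'m \<Rightarrow> real^'n^'m" where
  "X_next z p = svt (1/\<sigma>) (B + J (tau_next z p) - E_next z p + (1/\<sigma>) *\<^sub>R Y_next z p)"

definition state :: "real^'n^'m \<Rightarrow> real^'n^'m \<Rightarrow> real^'n^'m \<Rightarrow> (real^'n^'m) \<times> (real^'n^'m)" where
  "state X E Y = (X - (1/\<sigma>) *\<^sub>R Y, range_proj E)"

definition admm_map :: "(real^'n^'m) \<times> (real^'n^'m) \<Rightarrow> (real^'n^'m) \<times> (real^'n^'m)" where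
  "admm_map s = state (X_next (fst s) (snd s)) (E_next (fst s) (snd s)) (Y_next (fst s) (snd s))"

definition kkt :: "real^'n^'m \<Rightarrow> real^'p \<Rightarrow> real^'n^'m \<Rightarrow> real^'n^'m \<Rightarrow> bool" where
  "kkt X t E Y \<longleftrightarrow> B + J t = X + E \<and> adjoint J Y = 0
     \<and> (\<forall>X'. nuclear_sup X + Y \<bullet> (X' - X) \<le> nuclear_sup X')
     \<and> (\<forall>E'. lam * l1_norm E + Y \<bullet> (E' - E) \<le> lam * l1_norm E')"

lemma kkt_imp_optimal_P:
  assumes "kkt X t E Y" shows "optimal_P lam B J X t E"
  unfolding optimal_P_def nuclear_norm_eq_nuclear_sup
proof (intro conjI allI impI)
  show feas: "B + J t = X + E" using assms by (simp add: kkt_def)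
  fix X' t' E' assume feas': "B + J t' = X' + E'"
  have "J (t' - t) = (B + J t') - (B + J t)" by (simp add: J.diff)
  also have "\<dots> = (X' - X) + (E' - E)" unfolding feas feas' by (simp add: algebra_simps)
  finally have "Y \<bullet> (X' - X) + Y \<bullet> (E' - E) = Y \<bullet> J (t' - t)" by (simp add: inner_add_right)
  also have "\<dots> = 0" using assms by (simp add: kkt_def inner_commute[of Y] inner_adjoint_J[symmetric])
  finally have "Y \<bullet> (X' - X) + Y \<bullet> (E' - E) = 0" .
  moreover have "nuclear_sup X + Y \<bullet> (X' - X) \<le> nuclear_sup X'"
    and "lam * l1_norm E + Y \<bullet> (E' - E) \<le> lam * l1_norm E'"
    using assms by (simp_all add: kkt_def)
  ultimately show "nuclear_sup X + lam * l1_norm E \<le> nuclear_sup X' + lam * l1_norm E'" by linarith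
qed

lemma Y_next_residual: "B + J (tau_next z p) - E_next z p = z + (1/\<sigma>) *\<^sub>R Y_next z p"
  using sig by (simp add: Y_next_def algebra_simps)

lemma adjoint_J_Y_next: "adjoint J (Y_next z p) = 0"
  by (simp add: Y_next_def tau_next_def J_adj.scaleR J_adj.add J_adj.diff J.neg J_adj.neg
      adjoint_J_J_normal_inv)

lemma J_tau_half_minus_J_tau_next: "J (tau_half z p) - J (tau_next z p) = range_proj (p - E_next z p)"
  by (simp add: tau_half_def tau_next_def range_proj_def J.neg normal_inv.diff J_adj.diff
      flip: J.diff)

lemma E_next_variational:
  "lam * l1_norm (E_next z p) + (Y_next z p + \<sigma> *\<^sub>R range_proj (p - E_next z p)) \<bullet> (E' - E_next z p)
     \<le> lam * l1_norm E'"
proof -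
  define E c where "E = E_next z p" and "c = B - z + J (tau_half z p)"
  have "(lam/\<sigma>) * l1_norm E + (c - E) \<bullet> (E' - E) \<le> (lam/\<sigma>) * l1_norm E'"
    unfolding E_def E_next_def c_def[symmetric] using lam sig by (intro soft_variational_inequality) auto
  then have "\<sigma> * ((lam/\<sigma>) * l1_norm E + (c - E) \<bullet> (E' - E)) \<le> \<sigma> * ((lam/\<sigma>) * l1_norm E')"
    using sig by (intro mult_left_mono) auto
  moreover have "\<sigma> * ((lam/\<sigma>) * a) = lam * a" for a using sig by simp
  ultimately have "lam * l1_norm E + \<sigma> * ((c - E) \<bullet> (E' - E)) \<le> lam * l1_norm E'"
    by (simp only: distrib_left)
  moreover have "\<sigma> *\<^sub>R (c - E) = Y_next z p + \<sigma> *\<^sub>R range_proj (p - E)"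
    using J_tau_half_minus_J_tau_next[of z p]
    by (simp add: E_def c_def Y_next_def algebra_simps flip: scaleR_add_right)
  then have "(Y_next z p + \<sigma> *\<^sub>R range_proj (p - E)) \<bullet> (E' - E) = \<sigma> * ((c - E) \<bullet> (E' - E))"
    by (simp flip: inner_scaleR_left)
  ultimately show ?thesis unfolding E_def by linarith
qed

lemma X_next_variational:
  "nuclear_sup (X_next z p)
     + (Y_next z p + \<sigma> *\<^sub>R (z - (X_next z p - (1/\<sigma>) *\<^sub>R Y_next z p))) \<bullet> (Z - X_next z p)
     \<le> nuclear_sup Z"
proof -
  define c where "c = B + J (tau_next z p) - E_next z p + (1/\<sigma>) *\<^sub>R Y_next z p"
  have "nuclear_sup (X_next z p) + (1/(1/\<sigma>)) * ((c - X_next z p) \<bullet> (Z - X_next z p)) \<le> nuclear_sup Z"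
    unfolding X_next_def c_def[symmetric] using sig by (intro svt_variational_inequality) simp
  moreover have "\<sigma> *\<^sub>R (c - X_next z p) = Y_next z p + \<sigma> *\<^sub>R (z - (X_next z p - (1/\<sigma>) *\<^sub>R Y_next z p))"
    using sig by (simp add: c_def Y_next_residual algebra_simps)
  ultimately show ?thesis by (simp flip: inner_scaleR_left)
qed

lemma admm_map_Pair: "admm_map (z, p) = state (X_next z p) (E_next z p) (Y_next z p)"
  by (simp add: admm_map_def)

lemma inner_range_proj_swap:
  "range_proj (p - E) \<bullet> (E - E') = (range_proj E - range_proj E') \<bullet> (p - range_proj E)"
proof -
  have "range_proj (p - E) \<bullet> (E - E') = range_proj (p - E) \<bullet> range_proj (E - E')"
    by (rule inner_range_proj)
  also have "\<dots> = range_proj (E - E') \<bullet> range_proj (p - E)" by (rule inner_commute)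
  also have "\<dots> = range_proj (E - E') \<bullet> (p - E)" by (rule inner_range_proj[symmetric])
  also have "\<dots> = range_proj (E - E') \<bullet> (p - range_proj E)"
    by (simp add: inner_diff_right inner_range_proj[of "E - E'" E])
  finally show ?thesis by (simp add: range_proj.diff)
qed

lemma E_next_monotone:
  assumes "kkt Xs ts Es Ys"
  shows "0 \<le> (Y_next z p - Ys) \<bullet> (E_next z p - Es) + \<sigma> * (range_proj (p - E_next z p) \<bullet> (E_next z p - Es))"
proof -
  define E Y where "E = E_next z p" and "Y = Y_next z p"
  have "lam * l1_norm E + (Y + \<sigma> *\<^sub>R range_proj (p - E)) \<bullet> (Es - E) \<le> lam * l1_norm Es"
    unfolding E_def Y_def by (rule E_next_variational)
  moreover have "lam * l1_norm Es + Ys \<bullet> (E - Es) \<le> lam * l1_norm E"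
    using assms by (simp add: kkt_def)
  moreover have "(Y + \<sigma> *\<^sub>R range_proj (p - E)) \<bullet> (Es - E) + Ys \<bullet> (E - Es)
      = - ((Y - Ys) \<bullet> (E - Es) + \<sigma> * (range_proj (p - E) \<bullet> (E - Es)))"
    by (simp add: inner_add_left inner_diff_left inner_diff_right algebra_simps)
  ultimately show ?thesis unfolding E_def Y_def by linarith
qed

lemma X_next_monotone:
  fixes z p :: "real^'n^'m"
  assumes "kkt Xs ts Es Ys"
  defines "r \<equiv> z - (X_next z p - (1/\<sigma>) *\<^sub>R Y_next z p)"
  shows "0 \<le> (Y_next z p - Ys) \<bullet> (X_next z p - Xs) + \<sigma> * (r \<bullet> (X_next z p - Xs))"
proof -
  define X Y where "X = X_next z p" and "Y = Y_next z p"
  have "nuclear_sup X + (Y + \<sigma> *\<^sub>R r) \<bullet> (Xs - X) \<le> nuclear_sup Xs"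
    unfolding X_def Y_def r_def by (rule X_next_variational)
  moreover have "nuclear_sup Xs + Ys \<bullet> (X - Xs) \<le> nuclear_sup X"
    using assms by (simp add: kkt_def)
  moreover have "(Y + \<sigma> *\<^sub>R r) \<bullet> (Xs - X) + Ys \<bullet> (X - Xs)
      = - ((Y - Ys) \<bullet> (X - Xs) + \<sigma> * (r \<bullet> (X - Xs)))"
    by (simp add: inner_add_left inner_diff_left inner_diff_right algebra_simps)
  ultimately show ?thesis unfolding X_def Y_def by linarith
qed

lemma Y_next_inner_primal_gap:
  fixes z p :: "real^'n^'m"
  assumes "kkt Xs ts Es Ys"
  defines "r \<equiv> z - (X_next z p - (1/\<sigma>) *\<^sub>R Y_next z p)"
  shows "(Y_next z p - Ys) \<bullet> ((E_next z p - Es) + (X_next z p - Xs)) = - ((Y_next z p - Ys) \<bullet> r)"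
proof -
  define t where "t = tau_next z p"
  have "(E_next z p - Es) + (X_next z p - Xs) = (B + J t - r) - (B + J ts)"
    using assms(1) Y_next_residual[of z p] by (simp add: kkt_def r_def t_def algebra_simps)
  also have "\<dots> = J (t - ts) - r" by (simp add: J.diff)
  finally have gap: "(E_next z p - Es) + (X_next z p - Xs) = J (t - ts) - r" .
  have "(Y_next z p - Ys) \<bullet> J (t - ts) = (t - ts) \<bullet> adjoint J (Y_next z p - Ys)"
    by (simp add: inner_adjoint_J inner_commute)
  also have "\<dots> = 0" using assms(1) by (simp add: kkt_def adjoint_J_Y_next J_adj.diff)
  finally show ?thesis by (simp add: gap inner_diff_right)
qed

text \<open>Summing the two monotonicity inequalities, the dual terms cancel by
  \<open>Y_next_inner_primal_gap\<close> and what remains is \<open>\<sigma>\<close> times the defining inner product.\<close>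

lemma admm_map_firmly_quasi_nonexpansive:
  assumes kkt: "kkt Xs ts Es Ys"
  shows "firmly_quasi_nonexpansive_at admm_map (state Xs Es Ys)"
  unfolding firmly_quasi_nonexpansive_at_def
proof (intro allI)
  fix s :: "(real^'n^'m) \<times> (real^'n^'m)"
  obtain z p where s: "s = (z, p)" by fastforce
  define X E Y where "X = X_next z p" and "E = E_next z p" and "Y = Y_next z p"
  define r where "r = z - (X - (1/\<sigma>) *\<^sub>R Y)"
  have A1: "0 \<le> (Y - Ys) \<bullet> (E - Es) + \<sigma> * ((range_proj E - range_proj Es) \<bullet> (p - range_proj E))"
    using E_next_monotone[OF kkt, of z p] by (simp add: E_def Y_def inner_range_proj_swap)
  have A2: "0 \<le> (Y - Ys) \<bullet> (X - Xs) + \<sigma> * (r \<bullet> (X - Xs))"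
    using X_next_monotone[OF kkt, of z p] by (simp add: X_def Y_def r_def)
  have gap: "(Y - Ys) \<bullet> (E - Es) + (Y - Ys) \<bullet> (X - Xs) = - ((Y - Ys) \<bullet> r)"
    using Y_next_inner_primal_gap[OF kkt, of z p] by (simp add: X_def E_def Y_def r_def inner_add_right)
  have "admm_map s - state Xs Es Ys = ((X - Xs) - (1/\<sigma>) *\<^sub>R (Y - Ys), range_proj E - range_proj Es)"
    by (simp add: s admm_map_Pair state_def X_def E_def Y_def algebra_simps)
  moreover have "s - admm_map s = (r, p - range_proj E)"
    by (simp add: s admm_map_Pair state_def X_def E_def Y_def r_def)
  ultimately have "\<sigma> * ((admm_map s - state Xs Es Ys) \<bullet> (s - admm_map s))
      = \<sigma> * (r \<bullet> (X - Xs)) - (\<sigma> * (1/\<sigma>)) * ((Y - Ys) \<bullet> r)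
        + \<sigma> * ((range_proj E - range_proj Es) \<bullet> (p - range_proj E))"
    by (simp add: inner_Pair inner_diff_left inner_diff_right inner_commute[of r X]
        inner_commute[of r Xs] ring_distribs)
  also have "\<dots> = \<sigma> * (r \<bullet> (X - Xs)) - (Y - Ys) \<bullet> r
        + \<sigma> * ((range_proj E - range_proj Es) \<bullet> (p - range_proj E))"
    using sig by simp
  also have "\<dots> \<ge> 0" using A1 A2 gap by linarith
  finally show "0 \<le> (admm_map s - state Xs Es Ys) \<bullet> (s - admm_map s)"
    using sig by (simp add: zero_le_mult_iff)
qed

lemma kkt_if_admm_map_fixed:
  assumes fixed: "admm_map (z, p) = (z, p)"
  shows "kkt (X_next z p) (tau_next z p) (E_next z p) (Y_next z p)"
proof -
  define X E Y t where "X = X_next z p" and "E = E_next z p" and "Y = Y_next z p"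
    and "t = tau_next z p"
  have z: "z = X - (1/\<sigma>) *\<^sub>R Y" and p: "p = range_proj E"
    using fixed by (auto simp: admm_map_Pair state_def X_def E_def Y_def)
  have "B + J t - E = z + (1/\<sigma>) *\<^sub>R Y"
    unfolding t_def E_def Y_def by (rule Y_next_residual)
  then have "B + J t = X + E" by (simp add: z algebra_simps)
  moreover have "adjoint J Y = 0" unfolding Y_def by (rule adjoint_J_Y_next)
  moreover have "nuclear_sup X + (Y + \<sigma> *\<^sub>R (z - (X - (1/\<sigma>) *\<^sub>R Y))) \<bullet> (X' - X) \<le> nuclear_sup X'"
    for X'
    unfolding X_def Y_def by (rule X_next_variational)
  moreover have "lam * l1_norm E + (Y + \<sigma> *\<^sub>R range_proj (p - E)) \<bullet> (E' - E) \<le> lam * l1_norm E'"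
    for E'
    unfolding E_def Y_def by (rule E_next_variational)
  moreover have "range_proj (p - E) = 0" by (simp add: p range_proj.diff range_proj_idem)
  ultimately have "kkt X t E Y" by (simp add: kkt_def z)
  then show ?thesis by (simp add: X_def E_def Y_def t_def)
qed

lemma firmly_quasi_nonexpansive_at_fixed_point:
  assumes fixed: "admm_map q = q"
  shows "firmly_quasi_nonexpansive_at admm_map q"
proof -
  obtain z p where q: "q = (z, p)" by fastforce
  have "kkt (X_next z p) (tau_next z p) (E_next z p) (Y_next z p)"
    using fixed by (intro kkt_if_admm_map_fixed) (simp add: q)
  then have "firmly_quasi_nonexpansive_at admm_map (admm_map (z, p))"
    unfolding admm_map_Pair by (rule admm_map_firmly_quasi_nonexpansive)
  then show ?thesis using fixed q by simp
qed

lemma continuous_on_steps: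
  shows "continuous_on S (\<lambda>s. E_next (fst s) (snd s))"
    and "continuous_on S (\<lambda>s. tau_next (fst s) (snd s))"
    and "continuous_on S (\<lambda>s. Y_next (fst s) (snd s))"
    and "continuous_on S (\<lambda>s. X_next (fst s) (snd s))"
proof -
  have soft: "continuous_on UNIV (soft (lam/\<sigma>) :: real^'n^'m \<Rightarrow> _)"
    using lam sig by (intro continuous_on_soft) simp
  have svt: "continuous_on UNIV (svt (1/\<sigma>) :: real^'n^'m \<Rightarrow> _)"
    using sig by (intro continuous_on_svt) simp
  show E: "continuous_on S (\<lambda>s. E_next (fst s) (snd s))"
    unfolding E_next_def tau_half_def
    by (intro continuous_on_compose2[OF soft] continuous_intros
        J.continuous_on normal_inv.continuous_on J_adj.continuous_on) auto
  show t: "continuous_on S (\<lambda>s. tau_next (fst s) (snd s))"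
    unfolding tau_next_def
    by (intro continuous_intros normal_inv.continuous_on J_adj.continuous_on E)
  show Y: "continuous_on S (\<lambda>s. Y_next (fst s) (snd s))"
    unfolding Y_next_def by (intro continuous_intros J.continuous_on t E)
  show "continuous_on S (\<lambda>s. X_next (fst s) (snd s))"
    unfolding X_next_def
    by (intro continuous_on_compose2[OF svt] continuous_intros J.continuous_on t E Y) auto
qed

lemma continuous_on_admm_map: "continuous_on S admm_map"
  unfolding admm_map_def state_def
  by (intro continuous_intros continuous_on_steps range_proj.continuous_on)

end

section \<open>Existence of a KKT point\<close>

lemma norm_le_if_nuclear_subgradient:
  fixes X Y :: "real^'n^'m"
  assumes "\<And>X'. nuclear_sup X + Y \<bullet> (X' - X) \<le> nuclear_sup X'"
  shows "norm Y \<le> real CARD('m) * real CARD('n)"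
proof -
  define C where "C = real CARD('m) * real CARD('n)"
  have "norm Y * norm Y = Y \<bullet> Y" by (simp add: power2_norm_eq_inner[symmetric] power2_eq_square)
  also have "\<dots> \<le> nuclear_sup (X + Y) - nuclear_sup X" using assms[of "X + Y"] by simp
  also have "\<dots> \<le> nuclear_sup Y" using nuclear_sup_triangle[of X Y] by simp
  also have "\<dots> \<le> C * norm Y"
    unfolding C_def using nuclear_sup_le_l1_norm l1_norm_le_norm by (rule order_trans)
  finally have "norm Y * norm Y \<le> C * norm Y" .
  then show ?thesis unfolding C_def[symmetric]
    by (cases "norm Y = 0") (auto simp: C_def intro: mult_right_le_imp_le)
qed

lemma subgradient_inequality_limit:
  fixes f :: "'a::real_inner \<Rightarrow> real"
  assumes "continuous_on UNIV f" and "x \<longlonglongrightarrow> x0" and "y \<longlonglongrightarrow> y0"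
    and "\<And>j. f (x j) + y j \<bullet> (z - x j) \<le> f z"
  shows "f x0 + y0 \<bullet> (z - x0) \<le> f z"
proof -
  have "(\<lambda>j. f (x j) + y j \<bullet> (z - x j)) \<longlonglongrightarrow> f x0 + y0 \<bullet> (z - x0)"
    using continuous_on_tendsto_compose[OF assms(1) assms(2)] assms(2,3)
    by (intro tendsto_intros) auto
  then show ?thesis using LIMSEQ_le_const2 assms(4) by blast
qed

lemma adjoint_eq_0_if_least_squares:
  fixes L :: "'a::euclidean_space \<Rightarrow> 'b::euclidean_space"
  assumes L: "linear L" and min: "\<And>y. norm (v + L x) \<le> norm (v + L y)"
  shows "adjoint L (v + L x) = 0"
proof -
  define r where "r = v + L x"
  have "0 \<le> r \<bullet> L d" for d
  proof (rule nonneg_if_ge_neg_linear_near_0)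
    fix \<tau> :: real assume \<tau>: "0 < \<tau>" "\<tau> < 1"
    have eq: "v + L (x + \<tau> *\<^sub>R d) = r + \<tau> *\<^sub>R L d"
      by (simp add: r_def linear_add[OF L] linear_scale[OF L] algebra_simps)
    have "norm r \<le> norm (r + \<tau> *\<^sub>R L d)"
      using min[of "x + \<tau> *\<^sub>R d"] by (simp only: eq r_def[symmetric])
    then have "norm r^2 \<le> norm (r + \<tau> *\<^sub>R L d)^2" by (rule power_mono) simp
    then have "norm r^2 \<le> norm r^2 + 2 * \<tau> * (r \<bullet> L d) + \<tau>^2 * norm (L d)^2"
      by (simp only: norm_add_scaleR_power2)
    then have "0 \<le> \<tau> * (2 * (r \<bullet> L d) + \<tau> * norm (L d)^2)"
      by (simp add: algebra_simps power2_eq_square)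
    then have "0 \<le> 2 * (r \<bullet> L d) + \<tau> * norm (L d)^2" using \<tau> by (simp add: zero_le_mult_iff)
    then show "- (\<tau> * (norm (L d)^2 / 2)) \<le> r \<bullet> L d" by simp
  qed
  from this[of "adjoint L r"] this[of "- adjoint L r"] have "r \<bullet> L (adjoint L r) = 0"
    by (simp add: linear_neg[OF L])
  then have "adjoint L r \<bullet> adjoint L r = 0" by (simp add: adjoint_works[OF L] inner_commute[of r])
  then show ?thesis unfolding r_def[symmetric] by simp
qed

context sgs_admm
begin

definition penalty :: "real \<Rightarrow> real^'n^'m \<Rightarrow> real^'n^'m \<Rightarrow> real^'p \<Rightarrow> real" where
  "penalty \<mu> X E t = nuclear_sup X + lam * l1_norm E + \<mu> / 2 * norm (B + J t - X - E)^2"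

lemma norm_le_norm_J: obtains K where "K > 0" "\<And>t. norm t \<le> K * norm (J t)"
proof -
  interpret bounded_linear "\<lambda>v. normal_inv (adjoint J v)"
    by (rule bounded_linear_compose[OF normal_inv.bounded_linear_axioms J_adj.bounded_linear_axioms])
  obtain K where K: "K > 0" "\<And>v. norm (normal_inv (adjoint J v)) \<le> norm v * K"
    using pos_bounded by blast
  show ?thesis
  proof (rule that[OF K(1)])
    fix t show "norm t \<le> K * norm (J t)"
      using K(2)[of "J t"] by (simp add: normal_inv_adjoint_J_J mult.commute)
  qed
qed

lemma penalty_sublevel_bounded:
  assumes "1 \<le> \<mu>" and "penalty \<mu> X E t \<le> nuclear_sup B"
  shows "norm X \<le> nuclear_sup B" and "norm E \<le> nuclear_sup B / lam"
    and "norm (J t) \<le> 1 + 2 * nuclear_sup B + norm B + nuclear_sup B + nuclear_sup B / lam"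
proof -
  define res where "res = B + J t - X - E"
  have h: "nuclear_sup X + lam * l1_norm E + \<mu> / 2 * norm res^2 \<le> nuclear_sup B"
    using assms(2) by (simp add: penalty_def res_def)
  have p: "0 \<le> nuclear_sup X" "0 \<le> lam * l1_norm E" "0 \<le> \<mu> / 2 * norm res^2"
    using nuclear_sup_nonneg[of X] l1_norm_nonneg[of E] lam assms(1) by auto
  show nX: "norm X \<le> nuclear_sup B" using h p norm_le_nuclear_sup[of X] by linarith
  have "lam * l1_norm E \<le> nuclear_sup B" using h p by linarith
  then have "l1_norm E \<le> nuclear_sup B / lam" using lam by (simp add: pos_le_divide_eq mult.commute)
  then show nE: "norm E \<le> nuclear_sup B / lam" using norm_le_l1_norm[of E] by linarith
  have "\<mu> / 2 * norm res^2 \<le> nuclear_sup B" using h p by linarith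
  then have "norm res^2 \<le> 2 * nuclear_sup B / \<mu>" using assms(1) by (simp add: field_simps)
  also have "\<dots> \<le> 2 * nuclear_sup B"
    using assms(1) nuclear_sup_nonneg[of B] by (simp add: divide_le_eq mult_le_cancel_left1)
  finally have "norm res \<le> 1 + 2 * nuclear_sup B" by (intro le_1_plus_if_power2_le) auto
  moreover have "norm (J t) \<le> norm res + norm B + norm X + norm E"
  proof -
    have "norm (J t) = norm ((res - B + X) + E)" by (simp add: res_def)
    also have "\<dots> \<le> norm (res - B + X) + norm E" by (rule norm_triangle_ineq)
    also have "\<dots> \<le> norm (res - B) + norm X + norm E" using norm_triangle_ineq[of "res - B" X] by simp
    also have "\<dots> \<le> norm res + norm B + norm X + norm E" using norm_triangle_ineq4[of res B] by simp
    finally show ?thesis .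
  qed
  ultimately show "norm (J t) \<le> 1 + 2 * nuclear_sup B + norm B + nuclear_sup B + nuclear_sup B / lam"
    using nX nE by linarith
qed

lemma penalty_minimizer_exists:
  assumes "1 \<le> \<mu>"
  obtains X E t where "\<And>X' E' t'. penalty \<mu> X E t \<le> penalty \<mu> X' E' t'"
proof -
  define h where "h w = penalty \<mu> (fst w) (fst (snd w)) (snd (snd w))"
    for w :: "(real^'n^'m) \<times> (real^'n^'m) \<times> (real^'p)"
  define R where "R = 1 + 2 * nuclear_sup B + norm B + nuclear_sup B + nuclear_sup B / lam"
  obtain K where K: "K > 0" "\<And>t. norm t \<le> K * norm (J t)"
    by (rule norm_le_norm_J) (rule that)
  have cont: "continuous_on UNIV h"
    unfolding h_def penalty_def
    by (intro continuous_intros continuous_on_compose2[OF continuous_on_nuclear_sup[of UNIV]]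
        continuous_on_compose2[OF continuous_on_l1_norm[of UNIV]] J.continuous_on) auto
  have bound: "norm w \<le> nuclear_sup B + nuclear_sup B / lam + K * R" if "h w \<le> h (B, 0, 0)" for w
  proof -
    obtain X E t where w: "w = (X, E, t)" by (cases w) auto
    have "penalty \<mu> X E t \<le> nuclear_sup B"
      using that by (simp add: h_def w penalty_def l1_norm_def J.zero)
    note bounds = penalty_sublevel_bounded[OF assms this]
    have "norm t \<le> K * R"
      using K bounds(3) unfolding R_def by (meson mult_left_mono less_imp_le order_trans)
    moreover have "norm w \<le> norm X + (norm E + norm t)"
      unfolding w by (meson norm_Pair_le add_left_mono order_trans)
    ultimately show ?thesis using bounds(1,2) by linarith
  qed
  obtain w where w: "\<And>w'. h w \<le> h w'"
    using continuous_attains_min_if_sublevel_bounded[OF cont bound] by blast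
  have "penalty \<mu> (fst w) (fst (snd w)) (snd (snd w)) \<le> penalty \<mu> X' E' t'" for X' E' t'
    using w[of "(X', E', t')"] by (simp add: h_def)
  then show ?thesis by (rule that)
qed

lemma penalty_minimizer_subgradients:
  assumes min: "\<And>X' E' t'. penalty \<mu> X E t \<le> penalty \<mu> X' E' t'"
  defines "Y \<equiv> \<mu> *\<^sub>R (B + J t - X - E)"
  shows "nuclear_sup X + Y \<bullet> (X' - X) \<le> nuclear_sup X'"
    and "lam * l1_norm E + Y \<bullet> (E' - E) \<le> lam * l1_norm E'"
    and "\<mu> > 0 \<Longrightarrow> adjoint J Y = 0"
proof -
  have "nuclear_sup X + \<mu> / 2 * norm ((B + J t - E) - X)^2
      \<le> nuclear_sup X'' + \<mu> / 2 * norm ((B + J t - E) - X'')^2" for X''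
    using min[of X'' E t] by (simp add: penalty_def algebra_simps)
  then have "nuclear_sup X + 2 * (\<mu> / 2) * ((B + J t - E - X) \<bullet> (X' - X)) \<le> nuclear_sup X'"
    by (rule prox_variational_inequality[OF convex_on_nuclear_sup])
  then show "nuclear_sup X + Y \<bullet> (X' - X) \<le> nuclear_sup X'" by (simp add: Y_def algebra_simps)
  have "lam * l1_norm E + \<mu> / 2 * norm ((B + J t - X) - E)^2
      \<le> lam * l1_norm E'' + \<mu> / 2 * norm ((B + J t - X) - E'')^2" for E''
    using min[of X E'' t] by (simp add: penalty_def algebra_simps)
  then have "lam * l1_norm E + 2 * (\<mu> / 2) * ((B + J t - X - E) \<bullet> (E' - E)) \<le> lam * l1_norm E'"
    using lam by (intro prox_variational_inequality[where \<phi> = "\<lambda>E. lam * l1_norm E"])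
      (auto intro: convex_on_cmul convex_on_l1_norm)
  then show "lam * l1_norm E + Y \<bullet> (E' - E) \<le> lam * l1_norm E'" by (simp add: Y_def algebra_simps)
  assume "\<mu> > 0"
  then have "norm ((B - X - E) + J t) \<le> norm ((B - X - E) + J t'')" for t''
    using min[of X E t''] by (simp add: penalty_def algebra_simps)
  then have "adjoint J ((B - X - E) + J t) = 0" by (rule adjoint_eq_0_if_least_squares[OF linear_J])
  then have "adjoint J (B + J t - X - E) = 0" by (simp add: algebra_simps)
  then show "adjoint J Y = 0" by (simp add: Y_def J_adj.scaleR)
qed

lemma bounded_range_if_bounded_range_J:
  assumes "bounded (range (\<lambda>n. J (t n)))" shows "bounded (range t)"
proof -
  obtain K where K: "K > 0" "\<And>t. norm t \<le> K * norm (J t)"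
    by (rule norm_le_norm_J) (rule that)
  obtain M where M: "\<And>n. norm (J (t n)) \<le> M" using assms by (auto simp: bounded_iff)
  have "norm (t n) \<le> K * M" for n
  proof -
    have "K * norm (J (t n)) \<le> K * M" using M[of n] K(1) by (simp add: mult_left_mono)
    then show ?thesis using K(2)[of "t n"] by linarith
  qed
  then show ?thesis by (auto simp: bounded_iff)
qed

lemma penalty_approximate_kkt:
  obtains X E :: "nat \<Rightarrow> real^'n^'m" and t :: "nat \<Rightarrow> real^'p" and Y :: "nat \<Rightarrow> real^'n^'m"
  where "bounded (range X)" "bounded (range E)" "bounded (range t)" "bounded (range Y)"
    and "(\<lambda>n. B + J (t n) - X n - E n) \<longlonglongrightarrow> 0" and "\<And>n. adjoint J (Y n) = 0"
    and "\<And>n X'. nuclear_sup (X n) + Y n \<bullet> (X' - X n) \<le> nuclear_sup X'"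
    and "\<And>n E'. lam * l1_norm (E n) + Y n \<bullet> (E' - E n) \<le> lam * l1_norm E'"
proof -
  define \<mu> where "\<mu> n = real (Suc n)" for n
  have \<mu>: "1 \<le> \<mu> n" for n by (simp add: \<mu>_def)
  have "\<exists>X E t. \<forall>X' E' t'. penalty (\<mu> n) X E t \<le> penalty (\<mu> n) X' E' t'" for n
    by (rule penalty_minimizer_exists[OF \<mu>]) blast
  then obtain X E t where min: "\<And>n X' E' t'. penalty (\<mu> n) (X n) (E n) (t n) \<le> penalty (\<mu> n) X' E' t'"
    by metis
  define Y where "Y n = \<mu> n *\<^sub>R (B + J (t n) - X n - E n)" for n
  have subX: "nuclear_sup (X n) + Y n \<bullet> (X' - X n) \<le> nuclear_sup X'" for n X'
    unfolding Y_def by (rule penalty_minimizer_subgradients(1)[OF min])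
  have subE: "lam * l1_norm (E n) + Y n \<bullet> (E' - E n) \<le> lam * l1_norm E'" for n E'
    unfolding Y_def by (rule penalty_minimizer_subgradients(2)[OF min])
  have adj: "adjoint J (Y n) = 0" for n
    unfolding Y_def using \<mu>[of n] by (intro penalty_minimizer_subgradients(3)[OF min]) simp
  have "penalty (\<mu> n) (X n) (E n) (t n) \<le> nuclear_sup B" for n
    using min[of n B 0 0] by (simp add: penalty_def l1_norm_def J.zero)
  note bounds = penalty_sublevel_bounded[OF \<mu> this]
  define C where "C = real CARD('m) * real CARD('n)"
  have nY: "norm (Y n) \<le> C" for n unfolding C_def by (rule norm_le_if_nuclear_subgradient[OF subX])
  have "(\<lambda>n. B + J (t n) - X n - E n) \<longlonglongrightarrow> 0"
  proof (rule Lim_null_comparison)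
    have "norm (B + J (t n) - X n - E n) = norm (Y n) / \<mu> n" for n
      using \<mu>[of n] by (simp add: Y_def)
    then show "\<forall>\<^sub>F n in sequentially. norm (B + J (t n) - X n - E n) \<le> C * inverse (real (Suc n))"
      using nY \<mu> by (auto simp: \<mu>_def divide_right_mono field_simps)
    show "(\<lambda>n. C * inverse (real (Suc n))) \<longlonglongrightarrow> 0"
      using tendsto_mult_right_zero[OF LIMSEQ_inverse_real_of_nat] by simp
  qed
  moreover have "bounded (range X)" "bounded (range E)" "bounded (range Y)"
    using bounds(1,2) nY by (auto simp: bounded_iff)
  moreover have "bounded (range (\<lambda>n. J (t n)))" using bounds(3) by (auto simp: bounded_iff)
  then have "bounded (range t)" by (rule bounded_range_if_bounded_range_J)
  ultimately show ?thesis using that adj subX subE by blast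
qed

lemma kkt_exists: obtains X t E Y where "kkt X t E Y"
proof -
  obtain X E :: "nat \<Rightarrow> real^'n^'m" and t :: "nat \<Rightarrow> real^'p" and Y :: "nat \<Rightarrow> real^'n^'m"
    where bX: "bounded (range X)" and bE: "bounded (range E)" and bt: "bounded (range t)"
      and bY: "bounded (range Y)" and res: "(\<lambda>n. B + J (t n) - X n - E n) \<longlonglongrightarrow> 0"
      and adj: "\<And>n. adjoint J (Y n) = 0"
      and subX: "\<And>n X'. nuclear_sup (X n) + Y n \<bullet> (X' - X n) \<le> nuclear_sup X'"
      and subE: "\<And>n E'. lam * l1_norm (E n) + Y n \<bullet> (E' - E n) \<le> lam * l1_norm E'"
    by (rule penalty_approximate_kkt) (rule that)
  have "bounded (range (\<lambda>n. (X n, E n, t n, Y n)))"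
    by (rule bounded_subset[OF bounded_Times[OF bX bounded_Times[OF bE bounded_Times[OF bt bY]]]]) auto
  then obtain l r where r: "strict_mono r" and lim: "((\<lambda>n. (X n, E n, t n, Y n)) \<circ> r) \<longlonglongrightarrow> l"
    using bounded_imp_convergent_subsequence by blast
  obtain Xs Es ts Ys where l: "l = (Xs, Es, ts, Ys)" by (cases l) auto
  have cX: "(X \<circ> r) \<longlonglongrightarrow> Xs" and cE: "(E \<circ> r) \<longlonglongrightarrow> Es"
    and ct: "(t \<circ> r) \<longlonglongrightarrow> ts" and cY: "(Y \<circ> r) \<longlonglongrightarrow> Ys"
    using tendsto_fst[OF lim] tendsto_fst[OF tendsto_snd[OF lim]]
      tendsto_fst[OF tendsto_snd[OF tendsto_snd[OF lim]]] tendsto_snd[OF tendsto_snd[OF tendsto_snd[OF lim]]]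
    by (simp_all add: l o_def)
  have "(\<lambda>j. B + J ((t \<circ> r) j) - (X \<circ> r) j - (E \<circ> r) j) \<longlonglongrightarrow> B + J ts - Xs - Es"
    by (intro tendsto_intros J.tendsto cX cE ct)
  moreover have "(\<lambda>j. B + J ((t \<circ> r) j) - (X \<circ> r) j - (E \<circ> r) j) \<longlonglongrightarrow> 0"
    using LIMSEQ_subseq_LIMSEQ[OF res r] by (simp add: o_def)
  ultimately have "B + J ts = Xs + Es" using LIMSEQ_unique by (fastforce simp: algebra_simps)
  moreover have "adjoint J Ys = 0"
    using LIMSEQ_unique[OF J_adj.tendsto[OF cY]] adj by (simp add: o_def)
  moreover have "nuclear_sup Xs + Ys \<bullet> (X' - Xs) \<le> nuclear_sup X'" for X'
    by (rule subgradient_inequality_limit[OF continuous_on_nuclear_sup cX cY]) (simp add: subX)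
  moreover have "lam * l1_norm Es + Ys \<bullet> (E' - Es) \<le> lam * l1_norm E'" for E'
    by (rule subgradient_inequality_limit[OF _ cE cY])
      (auto intro: continuous_intros continuous_on_l1_norm simp: subE)
  ultimately show ?thesis using that unfolding kkt_def by blast
qed

end

section \<open>Convergence of the iterates\<close>

locale sgs_admm_iteration = sgs_admm B J lam \<sigma>
  for B :: "real^'n^'m" and J :: "real^'p \<Rightarrow> real^'n^'m" and lam \<sigma> :: real +
  fixes \<rho> :: real and Xt Et Yt X E Y :: "nat \<Rightarrow> real^'n^'m" and th t :: "nat \<Rightarrow> real^'p"
  assumes rho: "0 < \<rho>" "\<rho> < 2"
    and step_th: "\<And>k. th (Suc k) = - inv (adjoint J \<circ> J)
      (adjoint J (B - Xt k - Et k) + adjoint J ((1/\<sigma>) *\<^sub>R Yt k))"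
    and step_E: "\<And>k. E (Suc k) = soft (lam/\<sigma>) (B + J (th (Suc k)) - Xt k + (1/\<sigma>) *\<^sub>R Yt k)"
    and step_t: "\<And>k. t (Suc k) = - inv (adjoint J \<circ> J)
      (adjoint J (B - Xt k - E (Suc k)) + adjoint J ((1/\<sigma>) *\<^sub>R Yt k))"
    and step_Y: "\<And>k. Y (Suc k) = Yt k + \<sigma> *\<^sub>R (B + J (t (Suc k)) - Xt k - E (Suc k))"
    and step_X: "\<And>k. X (Suc k) = svt (1/\<sigma>) (B + J (t (Suc k)) - E (Suc k) + (1/\<sigma>) *\<^sub>R Y (Suc k))"
    and relax_X: "\<And>k. Xt (Suc k) = Xt k + \<rho> *\<^sub>R (X (Suc k) - Xt k)"
    and relax_E: "\<And>k. Et (Suc k) = Et k + \<rho> *\<^sub>R (E (Suc k) - Et k)"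
    and relax_Y: "\<And>k. Yt (Suc k) = Yt k + \<rho> *\<^sub>R (Y (Suc k) - Yt k)"
begin

definition st :: "nat \<Rightarrow> (real^'n^'m) \<times> (real^'n^'m)" where
  "st k = state (Xt k) (Et k) (Yt k)"

lemma iterates_eq_steps:
  shows "E (Suc k) = E_next (fst (st k)) (snd (st k))"
    and "t (Suc k) = tau_next (fst (st k)) (snd (st k))"
    and "Y (Suc k) = Y_next (fst (st k)) (snd (st k))"
    and "X (Suc k) = X_next (fst (st k)) (snd (st k))"
proof -
  have arg_th: "adjoint J (B - Xt k - Et k) + adjoint J ((1/\<sigma>) *\<^sub>R Yt k)
      = adjoint J (B - fst (st k) - snd (st k))"
    by (simp add: st_def state_def J_adj.diff J_adj.add adjoint_J_range_proj algebra_simps)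
  have th: "th (Suc k) = tau_half (fst (st k)) (snd (st k))"
    unfolding step_th arg_th by (simp add: tau_half_def normal_inv_def)
  show E: "E (Suc k) = E_next (fst (st k)) (snd (st k))"
    unfolding step_E E_next_def th[symmetric] by (simp add: st_def state_def algebra_simps)
  have arg_t: "adjoint J (B - Xt k - E (Suc k)) + adjoint J ((1/\<sigma>) *\<^sub>R Yt k)
      = adjoint J (B - fst (st k) - E (Suc k))"
    by (simp add: st_def state_def J_adj.diff J_adj.add algebra_simps)
  show t: "t (Suc k) = tau_next (fst (st k)) (snd (st k))"
    unfolding step_t arg_t by (simp add: tau_next_def normal_inv_def E)
  show Y: "Y (Suc k) = Y_next (fst (st k)) (snd (st k))"
    unfolding step_Y Y_next_def t[symmetric] E[symmetric] using sig
    by (simp add: st_def state_def algebra_simps)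
  show "X (Suc k) = X_next (fst (st k)) (snd (st k))"
    unfolding step_X X_next_def t[symmetric] E[symmetric] Y[symmetric] ..
qed

lemma st_relaxed_iteration: "st (Suc k) = st k + \<rho> *\<^sub>R (admm_map (st k) - st k)"
proof -
  have "admm_map (st k) = state (X (Suc k)) (E (Suc k)) (Y (Suc k))"
    by (simp add: admm_map_def iterates_eq_steps)
  then show ?thesis
    by (simp add: st_def state_def relax_X relax_E relax_Y range_proj.add range_proj.diff
        range_proj.scaleR algebra_simps)
qed

theorem iterates_converge_to_optimal:
  "\<exists>Xb tb Eb Yb. (X \<longlonglongrightarrow> Xb) \<and> (t \<longlonglongrightarrow> tb) \<and> (E \<longlonglongrightarrow> Eb) \<and> (Y \<longlonglongrightarrow> Yb)
     \<and> optimal_P lam B J Xb tb Eb"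
proof -
  interpret it: relaxed_iteration admm_map \<rho> st
    by unfold_locales (use st_relaxed_iteration rho in auto)
  obtain Xs ts Es Ys where "kkt Xs ts Es Ys" by (rule kkt_exists)
  then have q0: "firmly_quasi_nonexpansive_at admm_map (state Xs Es Ys)"
    by (rule admm_map_firmly_quasi_nonexpansive)
  obtain q where lim: "st \<longlonglongrightarrow> q" and fq: "admm_map q = q"
    by (rule it.converges_to_fixed_point[OF continuous_on_admm_map q0
          firmly_quasi_nonexpansive_at_fixed_point]) (assumption | rule that)+
  have step_lim: "g \<longlonglongrightarrow> f (fst q) (snd q)"
    if "\<And>k. g (Suc k) = f (fst (st k)) (snd (st k))" and "continuous_on UNIV (\<lambda>s. f (fst s) (snd s))"
    for g :: "nat \<Rightarrow> 'b::topological_space" and f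
  proof -
    have "(\<lambda>k. g (Suc k)) \<longlonglongrightarrow> f (fst q) (snd q)"
      using continuous_on_tendsto_compose[OF that(2) lim] that(1) by simp
    then show ?thesis by (rule LIMSEQ_imp_Suc)
  qed
  have "X \<longlonglongrightarrow> X_next (fst q) (snd q)" "t \<longlonglongrightarrow> tau_next (fst q) (snd q)"
    "E \<longlonglongrightarrow> E_next (fst q) (snd q)" "Y \<longlonglongrightarrow> Y_next (fst q) (snd q)"
    by (rule step_lim[of X X_next, OF iterates_eq_steps(4) continuous_on_steps(4)]
        step_lim[of t tau_next, OF iterates_eq_steps(2) continuous_on_steps(2)]
        step_lim[of E E_next, OF iterates_eq_steps(1) continuous_on_steps(1)]
        step_lim[of Y Y_next, OF iterates_eq_steps(3) continuous_on_steps(3)])+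
  moreover have "kkt (X_next (fst q) (snd q)) (tau_next (fst q) (snd q)) (E_next (fst q) (snd q))
      (Y_next (fst q) (snd q))"
    using fq by (intro kkt_if_admm_map_fixed) simp
  ultimately show ?thesis using kkt_imp_optimal_P by blast
qed

end

theorem theorem4:
  fixes B :: "real^'n^'m" and J :: "real^'p \<Rightarrow> real^'n^'m"
    and lam \<sigma> \<rho> :: real
    and Xt Et Yt X E Y :: "nat \<Rightarrow> real^'n^'m"
    and tt th t :: "nat \<Rightarrow> real^'p"
  assumes lin: "linear J"
    and inv: "bij (adjoint J \<circ> J)"
    and lam: "lam > 0" and sig: "\<sigma> > 0" and rho: "0 < \<rho>" "\<rho> < 2"
    and s1: "\<And>k. th (Suc k) = - inv (adjoint J \<circ> J)
               (adjoint J (B - Xt k - Et k) + adjoint J ((1/\<sigma>) *\<^sub>R Yt k))"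
    and s2: "\<And>k. E (Suc k) = soft (lam/\<sigma>) (B + J (th (Suc k)) - Xt k + (1/\<sigma>) *\<^sub>R Yt k)"
    and s3: "\<And>k. t (Suc k) = - inv (adjoint J \<circ> J)
               (adjoint J (B - Xt k - E (Suc k)) + adjoint J ((1/\<sigma>) *\<^sub>R Yt k))"
    and s4: "\<And>k. Y (Suc k) = Yt k + \<sigma> *\<^sub>R (B + J (t (Suc k)) - Xt k - E (Suc k))"
    and s5: "\<And>k. X (Suc k) = svt (1/\<sigma>) (B + J (t (Suc k)) - E (Suc k) + (1/\<sigma>) *\<^sub>R Y (Suc k))"
    and s6: "\<And>k. Xt (Suc k) = Xt k + \<rho> *\<^sub>R (X (Suc k) - Xt k)"
            "\<And>k. tt (Suc k) = tt k + \<rho> *\<^sub>R (t (Suc k) - tt k)"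
            "\<And>k. Et (Suc k) = Et k + \<rho> *\<^sub>R (E (Suc k) - Et k)"
            "\<And>k. Yt (Suc k) = Yt k + \<rho> *\<^sub>R (Y (Suc k) - Yt k)"
  shows "\<exists>Xb tb Eb Yb. (X \<longlonglongrightarrow> Xb) \<and> (t \<longlonglongrightarrow> tb) \<and> (E \<longlonglongrightarrow> Eb) \<and> (Y \<longlonglongrightarrow> Yb)
           \<and> optimal_P lam B J Xb tb Eb"
proof -
  \<comment> \<open>The relaxed sequence \<open>tt\<close> never enters the substeps.\<close>
  interpret sgs_admm_iteration B J lam \<sigma> \<rho> Xt Et Yt X E Y th t
    by (intro sgs_admm_iteration.intro sgs_admm.intro sgs_admm_iteration_axioms.intro)
      (rule lin inv lam sig rho s1 s2 s3 s4 s5 s6(1) s6(3) s6(4))+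
  show ?thesis by (rule iterates_converge_to_optimal)
qed

end
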